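(* Let the setting and the algorithm RandProx-DY be as in the context. Suppose that $\mu_f>0$ or $\mu_g>0$, that $\mu_{h^*}>0$, and that $0<\gamma<\frac{2}{L_f}$. For $t\ge0$ let $\Psi^t:=\frac{1}{\gamma}\|x^t-x^\star\|^2+(1+\omega)\big(\gamma(1+\omega)+2\mu_{h^*}\big)\|u^t-u^\star\|^2$, where $x^\star,u^\star$ are the unique solutions of the primal and dual problems. Then for every $t\ge0$, $\mathbb{E}[\Psi^t]\le c^t\Psi^0$, where $$c:=\max\left(\frac{(1-\gamma\mu_f)^2}{1+\gamma\mu_g},\ \frac{(\gamma L_f-1)^2}{1+\gamma\mu_g},\ 1-\frac{\frac{2}{\gamma}\mu_{h^*}}{(1+\omega)\big(1+\omega+\frac{2}{\gamma}\mu_{h^*}\big)}\right)<1.$$ Moreover, $(x^t)$ and $(\hat{x}^t)$ both converge to $x^\star$ and $(u^t)$ converges to $u^\star$, almost surely.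
   Context: $\mathcal{X}$ finite-dimensional real Hilbert space; $f:\mathcal{X}\to\mathbb{R}$ convex and $L_f$-smooth ($\nabla f$ $L_f$-Lipschitz); $g,h:\mathcal{X}\to\mathbb{R}\cup\{+\infty\}$ proper closed convex. A convex $\phi$ is $\mu_\phi$-strongly convex ($\mu_\phi\ge0$) if $\phi-\frac{\mu_\phi}{2}\|\cdot\|^2$ is convex; $\mu_f,\mu_g,\mu_{h^*}\ge0$ are such constants for $f$, $g$ and the conjugate $h^*$. $\mathrm{prox}_{\gamma\phi}(x):=\arg\min_{x'}(\gamma\phi(x')+\frac12\|x'-x\|^2)$. Primal problem: minimize $f(x)+g(x)+h(x)$; dual: minimize $(f+g)^*(-u)+h^*(u)$. It is assumed there exists $(x^\star,u^\star)$ with $0\in\nabla f(x^\star)+\partial g(x^\star)+u^\star$, $x^\star\in\partial h^*(u^\star)$. Algorithm RandProx-DY: inputs $x^0,u^0\in\mathcal{X}$, $\gamma>0$, $\omega\ge0$; for $t\ge0$: $\hat{x}^t:=\mathrm{prox}_{\gamma g}(x^t-\gamma\nabla f(x^t)-\gamma u^t)$; $d^t:=\mathcal{R}^t\big(\hat{x}^t-\mathrm{prox}_{\gamma(1+\omega)h}(\hat{x}^t+\gamma(1+\omega)u^t)\big)$; $x^{t+1}:=\hat{x}^t-\frac{1}{1+\omega}d^t$; $u^{t+1}:=u^t+\frac{1}{\gamma(1+\omega)^2}d^t$. With $\mathcal{F}_t$ the $\sigma$-algebra generated by $(x^0,u^0),\dots,(x^t,u^t)$ and $r^t:=\hat{x}^t-\mathrm{prox}_{\gamma(1+\omega)h}(\hat{x}^t+\gamma(1+\omega)u^t)$,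 the random estimate satisfies $\mathbb{E}[\mathcal{R}^t(r^t)\mid\mathcal{F}_t]=r^t$ and $\mathbb{E}[\|\mathcal{R}^t(r^t)-r^t\|^2\mid\mathcal{F}_t]\le\omega\|r^t\|^2$. *)

theory Defs
  imports "HOL-Analysis.Analysis" "HOL-Probability.Probability"
begin

definition epigraph :: "('a \<Rightarrow> ereal) \<Rightarrow> ('a \<times> real) set" where
  "epigraph \<phi> = {(x, a). \<phi> x \<le> ereal a}"

definition proper_fun :: "('a \<Rightarrow> ereal) \<Rightarrow> bool" where
  "proper_fun \<phi> \<longleftrightarrow> (\<forall>x. \<phi> x \<noteq> -\<infinity>) \<and> (\<exists>x. \<phi> x \<noteq> \<infinity>)"

definition convex_fun :: "('a::real_vector \<Rightarrow> ereal) \<Rightarrow> bool" where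
  "convex_fun \<phi> \<longleftrightarrow> convex (epigraph \<phi>)"

(* closed = lower semicontinuous = closed epigraph *)
definition closed_fun :: "('a::topological_space \<Rightarrow> ereal) \<Rightarrow> bool" where
  "closed_fun \<phi> \<longleftrightarrow> closed (epigraph \<phi>)"

definition pcc :: "('a::real_normed_vector \<Rightarrow> ereal) \<Rightarrow> bool" where
  "pcc \<phi> \<longleftrightarrow> proper_fun \<phi> \<and> convex_fun \<phi> \<and> closed_fun \<phi>"

definition strongly_convex_fun :: "real \<Rightarrow> ('a::real_normed_vector \<Rightarrow> ereal) \<Rightarrow> bool" where
  "strongly_convex_fun \<mu> \<phi> \<longleftrightarrow> \<mu> \<ge> 0 \<and> convex_fun (\<lambda>x. \<phi> x - ereal (\<mu> / 2 * (norm x)\<^sup>2))"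

definition conjugate :: "('a::real_inner \<Rightarrow> ereal) \<Rightarrow> 'a \<Rightarrow> ereal" where
  "conjugate \<phi> y = (SUP x. ereal (inner x y) - \<phi> x)"

definition subdiff :: "('a::real_inner \<Rightarrow> ereal) \<Rightarrow> 'a \<Rightarrow> 'a set" where
  "subdiff \<phi> x = {v. \<phi> x \<noteq> \<infinity> \<and> (\<forall>y. \<phi> x + ereal (inner v (y - x)) \<le> \<phi> y)}"

definition prox :: "real \<Rightarrow> ('a::real_normed_vector \<Rightarrow> ereal) \<Rightarrow> 'a \<Rightarrow> 'a" where
  "prox \<gamma> \<phi> x = (THE p. \<forall>z. ereal \<gamma> * \<phi> p + ereal ((norm (p - x))\<^sup>2 / 2)
                              \<le> ereal \<gamma> * \<phi> z + ereal ((norm (z - x))\<^sup>2 / 2))"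

definition dy_xhat :: "real \<Rightarrow> ('a::real_inner \<Rightarrow> 'a) \<Rightarrow> ('a \<Rightarrow> ereal) \<Rightarrow> 'a \<Rightarrow> 'a \<Rightarrow> 'a" where
  "dy_xhat \<gamma> gradf g x u = prox \<gamma> g (x - \<gamma> *\<^sub>R gradf x - \<gamma> *\<^sub>R u)"

definition dy_res :: "real \<Rightarrow> real \<Rightarrow> ('a::real_inner \<Rightarrow> ereal) \<Rightarrow> 'a \<Rightarrow> 'a \<Rightarrow> 'a" where
  "dy_res \<gamma> om h xh u = xh - prox (\<gamma> * (1 + om)) h (xh + (\<gamma> * (1 + om)) *\<^sub>R u)"

definition gen_filtration ::
  "'s measure \<Rightarrow> (nat \<Rightarrow> 's \<Rightarrow> 'a::euclidean_space) \<Rightarrow> (nat \<Rightarrow> 's \<Rightarrow> 'a) \<Rightarrow> nat \<Rightarrow> 's measure" where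
  "gen_filtration M x u t = sigma (space M)
     {(\<lambda>s. (x i s, u i s)) -` B \<inter> space M | i B. i \<le> t \<and> B \<in> sets (borel :: ('a \<times> 'a) measure)}"

definition dy_lyap :: "real \<Rightarrow> real \<Rightarrow> real \<Rightarrow> 'a::real_normed_vector \<Rightarrow> 'a \<Rightarrow> 'a \<Rightarrow> 'a \<Rightarrow> real" where
  "dy_lyap \<gamma> om muh xs us x u =
     1 / \<gamma> * (norm (x - xs))\<^sup>2 + (1 + om) * (\<gamma> * (1 + om) + 2 * muh) * (norm (u - us))\<^sup>2"

end

(*
  Let p be the prox point of h computed in one step, so that r = x_hat - p.  At the saddle point
  (xs, us) the subdifferential of g is mug-strongly monotone and that of conj h is muh-strongly
  monotone; together with the contraction factor max ((1 - gamma muf)^2, (gamma Lf - 1)^2) of the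
  gradient step x -> x - gamma grad f(x), this shows that the noiseless update (R = id) contracts
  the Lyapunov function Psi by the factor c, with enough slack to pay for the variance terms
  om |r|^2 / (1 + om)^2 and om |r|^2 / (gamma (1 + om)^2)^2.  Since R is conditionally unbiased,
  the cross term between the noise and the noiseless update vanishes in expectation, and the
  variance bound absorbs the remaining quadratic noise term; hence E Psi^(t+1) <= c E Psi^t.
  Summing the geometric bound gives sum_t Psi^t < oo almost surely, so Psi^t -> 0 almost surely,
  which yields convergence of x^t and u^t and, by Lipschitz continuity of the forward-backward
  step, of x_hat^t.
*)

theory Submission
  imports Defs
begin

section \<open>Smooth strongly convex functions\<close>

lemma has_real_derivative_along_line:
  fixes \<phi> :: "'a::real_inner \<Rightarrow> real"
  assumes "\<And>y. (\<phi> has_derivative (\<lambda>v. inner (G y) v)) (at y)"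
  shows "((\<lambda>s. \<phi> (x + s *\<^sub>R d)) has_real_derivative inner (G (x + s *\<^sub>R d)) d) (at s)"
proof -
  have "((\<lambda>s. x + s *\<^sub>R d) has_derivative (\<lambda>t. t *\<^sub>R d)) (at s)"
    by (auto intro!: derivative_eq_intros)
  from has_derivative_compose[OF this assms]
  have "((\<lambda>s. \<phi> (x + s *\<^sub>R d)) has_derivative (\<lambda>t. inner (G (x + s *\<^sub>R d)) (t *\<^sub>R d))) (at s)" .
  moreover have "(\<lambda>t. inner (G (x + s *\<^sub>R d)) (t *\<^sub>R d)) = (*) (inner (G (x + s *\<^sub>R d)) d)"
    by (auto simp: fun_eq_iff)
  ultimately show ?thesis by (simp add: has_field_derivative_def)
qed

lemma convex_on_gradient_ineq:
  fixes \<phi> :: "'a::real_inner \<Rightarrow> real"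
  assumes deriv: "\<And>y. (\<phi> has_derivative (\<lambda>v. inner (G y) v)) (at y)"
    and convex: "convex_on UNIV \<phi>"
  shows "\<phi> x + inner (G x) (y - x) \<le> \<phi> y"
proof -
  let ?k = "\<lambda>s. \<phi> (x + s *\<^sub>R (y - x))"
  have "convex_on UNIV ?k"
  proof (rule convex_onI)
    fix t a b :: real assume t: "0 < t" "t < 1"
    have "x + ((1 - t) * a + t * b) *\<^sub>R (y - x)
        = (1 - t) *\<^sub>R (x + a *\<^sub>R (y - x)) + t *\<^sub>R (x + b *\<^sub>R (y - x))"
      by (simp add: algebra_simps)
    then show "?k ((1 - t) *\<^sub>R a + t *\<^sub>R b) \<le> (1 - t) * ?k a + t * ?k b"
      using convex_onD[OF convex, of t "x + a *\<^sub>R (y - x)" "x + b *\<^sub>R (y - x)"] t by simp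
  qed auto
  then have "inner (G (x + 0 *\<^sub>R (y - x))) (y - x) * (1 - 0) \<le> ?k 1 - ?k 0"
    by (rule convex_on_imp_above_tangent)
       (use has_real_derivative_along_line[OF deriv, of x "y - x" 0] in auto)
  then show ?thesis by simp
qed

lemma lipschitz_gradient_upper_bound:
  fixes \<phi> :: "'a::real_inner \<Rightarrow> real"
  assumes deriv: "\<And>y. (\<phi> has_derivative (\<lambda>v. inner (G y) v)) (at y)"
    and lipschitz: "\<And>y z. norm (G y - G z) \<le> L * norm (y - z)"
  shows "\<phi> y \<le> \<phi> x + inner (G x) (y - x) + L / 2 * (norm (y - x))\<^sup>2"
proof -
  define d where "d = y - x"
  let ?k = "\<lambda>s. \<phi> (x + s *\<^sub>R d) - s * inner (G x) d - L / 2 * s\<^sup>2 * (norm d)\<^sup>2"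
  have "?k 1 \<le> ?k 0"
  proof (rule DERIV_nonpos_imp_nonincreasing[of 0 1 ?k])
    fix s :: real assume s: "0 \<le> s" "s \<le> 1"
    let ?k' = "inner (G (x + s *\<^sub>R d)) d - inner (G x) d - L / 2 * (2 * s) * (norm d)\<^sup>2"
    have "(?k has_real_derivative ?k') (at s)"
      by (auto intro!: derivative_eq_intros has_real_derivative_along_line[OF deriv])
    moreover have "inner (G (x + s *\<^sub>R d)) d - inner (G x) d \<le> L * s * (norm d)\<^sup>2"
    proof -
      have "inner (G (x + s *\<^sub>R d)) d - inner (G x) d = inner (G (x + s *\<^sub>R d) - G x) d"
        by (simp add: inner_diff_left)
      also have "\<dots> \<le> norm (G (x + s *\<^sub>R d) - G x) * norm d" by (rule norm_cauchy_schwarz)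
      also have "\<dots> \<le> L * norm (s *\<^sub>R d) * norm d"
        using lipschitz[of "x + s *\<^sub>R d" x] by (simp add: mult_right_mono)
      also have "\<dots> = L * s * (norm d)\<^sup>2" using s by (simp add: power2_eq_square)
      finally show ?thesis .
    qed
    ultimately show "\<exists>y. (?k has_real_derivative y) (at s) \<and> y \<le> 0" by auto
  qed simp
  then show ?thesis by (simp add: d_def)
qed

lemma has_derivative_minus_half_norm_sq:
  fixes \<phi> :: "'a::real_inner \<Rightarrow> real"
  assumes "\<And>y. (\<phi> has_derivative (\<lambda>v. inner (G y) v)) (at y)"
  shows "((\<lambda>y. \<phi> y - \<mu> / 2 * (norm y)\<^sup>2) has_derivative (\<lambda>v. inner (G y - \<mu> *\<^sub>R y) v)) (at y)"
proof -
  have "((\<lambda>y. \<phi> y - \<mu> / 2 * inner y y)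
          has_derivative (\<lambda>v. inner (G y) v - \<mu> / 2 * (inner y v + inner v y))) (at y)"
    by (auto intro!: derivative_eq_intros assms)
  moreover have "(\<lambda>v. inner (G y) v - \<mu> / 2 * (inner y v + inner v y)) = (\<lambda>v. inner (G y - \<mu> *\<^sub>R y) v)"
    by (auto simp: fun_eq_iff inner_diff_left inner_commute algebra_simps)
  ultimately show ?thesis by (simp add: power2_norm_eq_inner)
qed

lemma strongly_convex_gradient_ineq:
  fixes \<phi> :: "'a::real_inner \<Rightarrow> real"
  assumes deriv: "\<And>y. (\<phi> has_derivative (\<lambda>v. inner (G y) v)) (at y)"
    and strongly_convex: "convex_on UNIV (\<lambda>y. \<phi> y - \<mu> / 2 * (norm y)\<^sup>2)"
  shows "\<phi> x + inner (G x) (y - x) + \<mu> / 2 * (norm (y - x))\<^sup>2 \<le> \<phi> y"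
proof -
  have "\<phi> x - \<mu> / 2 * (norm x)\<^sup>2 + inner (G x - \<mu> *\<^sub>R x) (y - x) \<le> \<phi> y - \<mu> / 2 * (norm y)\<^sup>2"
    by (rule convex_on_gradient_ineq[OF has_derivative_minus_half_norm_sq[OF deriv] strongly_convex])
  then show ?thesis
    by (simp add: algebra_simps power2_norm_eq_inner inner_diff_left inner_diff_right inner_commute)
qed

lemma strongly_convex_gradient_monotone:
  fixes \<phi> :: "'a::real_inner \<Rightarrow> real"
  assumes deriv: "\<And>y. (\<phi> has_derivative (\<lambda>v. inner (G y) v)) (at y)"
    and strongly_convex: "convex_on UNIV (\<lambda>y. \<phi> y - \<mu> / 2 * (norm y)\<^sup>2)"
  shows "\<mu> * (norm (y - x))\<^sup>2 \<le> inner (G y - G x) (y - x)"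
  using strongly_convex_gradient_ineq[OF assms, of x y] strongly_convex_gradient_ineq[OF assms, of y x]
  by (simp add: norm_minus_commute inner_diff_left inner_diff_right algebra_simps)

lemma lipschitz_const_nonneg:
  fixes G :: "'a::euclidean_space \<Rightarrow> 'b::real_normed_vector"
  assumes "\<And>y z. norm (G y - G z) \<le> L * norm (y - z)"
  shows "0 \<le> L"
proof -
  obtain b :: 'a where "b \<noteq> 0" using nonzero_Basis SOME_Basis by blast
  moreover have "0 \<le> L * norm (b - 0)" using assms[of b 0] norm_ge_zero order_trans by blast
  ultimately show ?thesis by (simp add: zero_le_mult_iff)
qed

lemma strong_convexity_le_lipschitz_const:
  fixes \<phi> :: "'a::euclidean_space \<Rightarrow> real"
  assumes deriv: "\<And>y. (\<phi> has_derivative (\<lambda>v. inner (G y) v)) (at y)"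
    and lipschitz: "\<And>y z. norm (G y - G z) \<le> L * norm (y - z)"
    and strongly_convex: "convex_on UNIV (\<lambda>y. \<phi> y - \<mu> / 2 * (norm y)\<^sup>2)"
  shows "\<mu> \<le> L"
proof -
  obtain b :: 'a where b: "b \<noteq> 0" using nonzero_Basis SOME_Basis by blast
  have "\<mu> / 2 * (norm b)\<^sup>2 \<le> L / 2 * (norm b)\<^sup>2"
    using strongly_convex_gradient_ineq[OF deriv strongly_convex, of 0 b]
      lipschitz_gradient_upper_bound[OF deriv lipschitz, of b 0] by simp
  then show ?thesis using b by simp
qed

lemma le_of_le_add_small_multiple:
  fixes a b c :: real
  assumes "\<And>e. 0 < e \<Longrightarrow> e \<le> 1 \<Longrightarrow> c \<le> a + e * b"
  shows "c \<le> a"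
proof (rule ccontr)
  assume "\<not> c \<le> a"
  then have ca: "a < c" by simp
  then have b: "b > 0" using assms[of 1] by fastforce
  define e where "e = min 1 ((c - a) / (2 * b))"
  have e: "0 < e" "e \<le> 1" using ca b by (auto simp: e_def)
  have "e * b \<le> (c - a) / (2 * b) * b" unfolding e_def using b by (intro mult_right_mono) auto
  also have "\<dots> = (c - a) / 2" using b by simp
  finally show False using assms[OF e] ca by (simp add: field_simps)
qed

text \<open>Baillon--Haddad: compare the two bounds at the point \<open>y - (G y - G x) / K\<close>.\<close>

lemma tangent_bounds_imp_cocoercive:
  fixes \<phi> :: "'a::real_inner \<Rightarrow> real"
  assumes lower: "\<And>x y. \<phi> x + inner (G x) (y - x) \<le> \<phi> y"
    and upper: "\<And>x y. \<phi> y \<le> \<phi> x + inner (G x) (y - x) + K / 2 * (norm (y - x))\<^sup>2"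
    and K: "K > 0"
  shows "(norm (G y - G x))\<^sup>2 \<le> K * inner (G y - G x) (y - x)"
proof -
  have gap: "\<phi> x + inner (G x) (y - x) + (norm (G y - G x))\<^sup>2 / (2 * K) \<le> \<phi> y" for x y
  proof -
    define D where "D = G y - G x"
    define z where "z = y - (1 / K) *\<^sub>R D"
    have "\<phi> x + inner (G x) (z - x) \<le> \<phi> z" by (rule lower)
    moreover have "\<phi> z \<le> \<phi> y + inner (G y) (z - y) + K / 2 * (norm (z - y))\<^sup>2" by (rule upper)
    moreover have "inner (G x) (z - x) = inner (G x) (y - x) - inner (G x) D / K"
      unfolding z_def by (simp add: inner_diff_right algebra_simps)
    moreover have "inner (G y) (z - y) = - inner (G y) D / K"
      unfolding z_def by (simp add: inner_diff_right)
    moreover have "K / 2 * (norm (z - y))\<^sup>2 = (norm D)\<^sup>2 / (2 * K)"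
      unfolding z_def using K by (simp add: power2_eq_square)
    moreover have "inner (G y) D / K - inner (G x) D / K = (norm D)\<^sup>2 / K"
      unfolding D_def by (simp add: diff_divide_distrib[symmetric] power2_norm_eq_inner inner_diff_left)
    ultimately show ?thesis unfolding D_def by (simp add: field_simps)
  qed
  have "(norm (G y - G x))\<^sup>2 / K \<le> inner (G y - G x) (y - x)"
    using gap[of x y] gap[of y x]
    by (simp add: norm_minus_commute inner_diff_left inner_diff_right field_simps)
  then show ?thesis using K by (simp add: field_simps)
qed

lemma strongly_convex_cocoercive:
  fixes \<phi> :: "'a::euclidean_space \<Rightarrow> real"
  assumes deriv: "\<And>y. (\<phi> has_derivative (\<lambda>v. inner (G y) v)) (at y)"
    and lipschitz: "\<And>y z. norm (G y - G z) \<le> L * norm (y - z)"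
    and strongly_convex: "convex_on UNIV (\<lambda>y. \<phi> y - \<mu> / 2 * (norm y)\<^sup>2)"
  shows "(norm (G y - G x))\<^sup>2 + \<mu> * L * (norm (y - x))\<^sup>2 \<le> (L + \<mu>) * inner (G y - G x) (y - x)"
proof -
  define \<psi> where "\<psi> = (\<lambda>y. \<phi> y - \<mu> / 2 * (norm y)\<^sup>2)"
  define G\<psi> where "G\<psi> = (\<lambda>y. G y - \<mu> *\<^sub>R y)"
  have lower: "\<psi> x + inner (G\<psi> x) (y - x) \<le> \<psi> y" for x y
    unfolding \<psi>_def G\<psi>_def
    by (rule convex_on_gradient_ineq[OF has_derivative_minus_half_norm_sq[OF deriv] strongly_convex])
  have upper: "\<psi> y \<le> \<psi> x + inner (G\<psi> x) (y - x) + (L - \<mu>) / 2 * (norm (y - x))\<^sup>2" for x y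
    using lipschitz_gradient_upper_bound[OF deriv lipschitz, of y x] unfolding \<psi>_def G\<psi>_def
    by (simp add: field_simps power2_norm_eq_inner inner_diff_left inner_diff_right inner_commute)
  have \<mu>L: "\<mu> \<le> L" by (rule strong_convexity_le_lipschitz_const[OF deriv lipschitz strongly_convex])
  have "(norm (G\<psi> y - G\<psi> x))\<^sup>2 \<le> (L - \<mu>) * inner (G\<psi> y - G\<psi> x) (y - x)"
  proof (rule le_of_le_add_small_multiple)
    fix e :: real assume e: "0 < e" "e \<le> 1"
    have "(norm (G\<psi> y - G\<psi> x))\<^sup>2 \<le> (L - \<mu> + e) * inner (G\<psi> y - G\<psi> x) (y - x)"
    proof (rule tangent_bounds_imp_cocoercive[OF lower])
      show "\<psi> y \<le> \<psi> x + inner (G\<psi> x) (y - x) + (L - \<mu> + e) / 2 * (norm (y - x))\<^sup>2" for x y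
        using upper[of y x] e by (smt (verit) divide_right_mono mult_right_mono zero_le_power2)
    qed (use \<mu>L e in simp)
    then show "(norm (G\<psi> y - G\<psi> x))\<^sup>2
        \<le> (L - \<mu>) * inner (G\<psi> y - G\<psi> x) (y - x) + e * inner (G\<psi> y - G\<psi> x) (y - x)"
      by (simp add: algebra_simps)
  qed
  moreover have "G\<psi> y - G\<psi> x = (G y - G x) - \<mu> *\<^sub>R (y - x)" by (simp add: G\<psi>_def algebra_simps)
  ultimately show ?thesis
    by (simp add: power2_norm_eq_inner inner_diff_left inner_diff_right inner_commute algebra_simps)
qed

lemma gradient_step_quadratic_bound:
  fixes \<mu> L \<gamma> ip ng nh :: real
  assumes "0 \<le> \<mu>" "\<mu> \<le> L" "0 \<le> \<gamma>" "0 \<le> nh"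
    and cocoercive: "ng + \<mu> * L * nh \<le> (L + \<mu>) * ip"
    and monotone: "\<mu> * nh \<le> ip"
    and lower: "\<mu>\<^sup>2 * nh \<le> ng" and upper: "ng \<le> L\<^sup>2 * nh"
  shows "nh - 2 * \<gamma> * ip + \<gamma>\<^sup>2 * ng \<le> max ((1 - \<gamma> * \<mu>)\<^sup>2) ((\<gamma> * L - 1)\<^sup>2) * nh"
proof (cases "L + \<mu> = 0")
  case True
  then have "\<mu> = 0" "L = 0" using assms by auto
  then show ?thesis using assms by (auto simp: max_def)
next
  case False
  then have pos: "L + \<mu> > 0" using assms by auto
  have "(L + \<mu>) * (nh - 2 * \<gamma> * ip + \<gamma>\<^sup>2 * ng)
      \<le> (L + \<mu>) * nh - 2 * \<gamma> * (ng + \<mu> * L * nh) + (L + \<mu>) * \<gamma>\<^sup>2 * ng"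
    using mult_left_mono[OF cocoercive, of "2 * \<gamma>"] assms(3) by (simp add: algebra_simps)
  also have "\<dots> = (L + \<mu>) * nh - 2 * \<gamma> * \<mu> * L * nh + \<gamma> * ((L + \<mu>) * \<gamma> - 2) * ng"
    by (simp add: algebra_simps power2_eq_square)
  also have "\<dots> \<le> (L + \<mu>) * max ((1 - \<gamma> * \<mu>)\<^sup>2) ((\<gamma> * L - 1)\<^sup>2) * nh"
  proof (cases "(L + \<mu>) * \<gamma> \<le> 2")
    case True
    then have "\<gamma> * ((L + \<mu>) * \<gamma> - 2) * ng \<le> \<gamma> * ((L + \<mu>) * \<gamma> - 2) * (\<mu>\<^sup>2 * nh)"
      using assms(3) lower by (intro mult_left_mono_neg) (auto simp: mult_nonneg_nonpos)
    moreover have "(L + \<mu>) * nh - 2 * \<gamma> * \<mu> * L * nh + \<gamma> * ((L + \<mu>) * \<gamma> - 2) * (\<mu>\<^sup>2 * nh)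
        = (L + \<mu>) * (1 - \<gamma> * \<mu>)\<^sup>2 * nh"
      by (simp add: algebra_simps power2_eq_square)
    moreover have "(L + \<mu>) * (1 - \<gamma> * \<mu>)\<^sup>2 * nh \<le> (L + \<mu>) * max ((1 - \<gamma> * \<mu>)\<^sup>2) ((\<gamma> * L - 1)\<^sup>2) * nh"
      using pos assms(4) by (intro mult_right_mono mult_left_mono) auto
    ultimately show ?thesis by linarith
  next
    case False
    then have "\<gamma> * ((L + \<mu>) * \<gamma> - 2) * ng \<le> \<gamma> * ((L + \<mu>) * \<gamma> - 2) * (L\<^sup>2 * nh)"
      using assms(3) upper by (intro mult_left_mono) auto
    moreover have "(L + \<mu>) * nh - 2 * \<gamma> * \<mu> * L * nh + \<gamma> * ((L + \<mu>) * \<gamma> - 2) * (L\<^sup>2 * nh)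
        = (L + \<mu>) * (\<gamma> * L - 1)\<^sup>2 * nh"
      by (simp add: algebra_simps power2_eq_square)
    moreover have "(L + \<mu>) * (\<gamma> * L - 1)\<^sup>2 * nh \<le> (L + \<mu>) * max ((1 - \<gamma> * \<mu>)\<^sup>2) ((\<gamma> * L - 1)\<^sup>2) * nh"
      using pos assms(4) by (intro mult_right_mono mult_left_mono) auto
    ultimately show ?thesis by linarith
  qed
  finally show ?thesis using pos by (simp add: mult.assoc)
qed

lemma gradient_step_contraction:
  fixes \<phi> :: "'a::euclidean_space \<Rightarrow> real"
  assumes deriv: "\<And>y. (\<phi> has_derivative (\<lambda>v. inner (G y) v)) (at y)"
    and lipschitz: "\<And>y z. norm (G y - G z) \<le> L * norm (y - z)"
    and "\<mu> \<ge> 0" and strongly_convex: "convex_on UNIV (\<lambda>y. \<phi> y - \<mu> / 2 * (norm y)\<^sup>2)"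
    and "\<gamma> \<ge> 0"
  shows "(norm ((x - \<gamma> *\<^sub>R G x) - (y - \<gamma> *\<^sub>R G y)))\<^sup>2
       \<le> max ((1 - \<gamma> * \<mu>)\<^sup>2) ((\<gamma> * L - 1)\<^sup>2) * (norm (x - y))\<^sup>2"
proof -
  define g where "g = G y - G x"
  define d where "d = y - x"
  have "\<mu> * norm d \<le> norm g"
  proof (cases "d = 0")
    case False
    have "\<mu> * norm d * norm d \<le> inner g d"
      using strongly_convex_gradient_monotone[OF deriv strongly_convex, of y x]
      by (simp add: g_def d_def power2_eq_square)
    also have "\<dots> \<le> norm g * norm d" by (rule norm_cauchy_schwarz)
    finally show ?thesis using False by simp
  qed simp
  then have lower: "\<mu>\<^sup>2 * (norm d)\<^sup>2 \<le> (norm g)\<^sup>2"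
    using power_mono[of "\<mu> * norm d" "norm g" 2] \<open>\<mu> \<ge> 0\<close> by (simp add: power_mult_distrib)
  have "(x - \<gamma> *\<^sub>R G x) - (y - \<gamma> *\<^sub>R G y) = - (d - \<gamma> *\<^sub>R g)"
    by (simp add: d_def g_def algebra_simps)
  then have "norm ((x - \<gamma> *\<^sub>R G x) - (y - \<gamma> *\<^sub>R G y)) = norm (d - \<gamma> *\<^sub>R g)"
    by (simp only: norm_minus_cancel)
  then have "(norm ((x - \<gamma> *\<^sub>R G x) - (y - \<gamma> *\<^sub>R G y)))\<^sup>2
      = (norm d)\<^sup>2 - 2 * \<gamma> * inner g d + \<gamma>\<^sup>2 * (norm g)\<^sup>2"
    by (simp add: power2_norm_eq_inner inner_diff_left inner_diff_right inner_commute algebra_simps)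
       (simp add: power2_eq_square)
  also have "\<dots> \<le> max ((1 - \<gamma> * \<mu>)\<^sup>2) ((\<gamma> * L - 1)\<^sup>2) * (norm d)\<^sup>2"
  proof (rule gradient_step_quadratic_bound)
    show "(norm g)\<^sup>2 + \<mu> * L * (norm d)\<^sup>2 \<le> (L + \<mu>) * inner g d"
      unfolding g_def d_def by (rule strongly_convex_cocoercive[OF deriv lipschitz strongly_convex])
    show "\<mu> * (norm d)\<^sup>2 \<le> inner g d"
      unfolding g_def d_def by (rule strongly_convex_gradient_monotone[OF deriv strongly_convex])
    show "(norm g)\<^sup>2 \<le> L\<^sup>2 * (norm d)\<^sup>2"
      using lipschitz[of y x] unfolding g_def d_def
      by (metis norm_ge_zero power_mono power_mult_distrib)
    show "\<mu> \<le> L" by (rule strong_convexity_le_lipschitz_const[OF deriv lipschitz strongly_convex])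
  qed (use assms lower in auto)
  finally show ?thesis by (simp add: d_def norm_minus_commute)
qed

section \<open>Subdifferentials, conjugates and proximal maps\<close>

lemma convex_fun_le_combination:
  assumes "convex_fun \<phi>" "\<phi> x = ereal a" "\<phi> y = ereal b" "0 \<le> s" "s \<le> 1"
  shows "\<phi> ((1 - s) *\<^sub>R x + s *\<^sub>R y) \<le> ereal ((1 - s) * a + s * b)"
proof -
  have "(x, a) \<in> epigraph \<phi>" "(y, b) \<in> epigraph \<phi>" using assms(2,3) by (auto simp: epigraph_def)
  then have "(1 - s) *\<^sub>R (x, a) + s *\<^sub>R (y, b) \<in> epigraph \<phi>"
    using assms(1,4,5) unfolding convex_fun_def by (intro convexD) auto
  then show ?thesis by (simp add: epigraph_def)
qed

lemma norm_convex_combination_sq: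
  fixes x y :: "'a::real_inner"
  shows "(norm ((1 - s) *\<^sub>R x + s *\<^sub>R y))\<^sup>2
       = (1 - s) * (norm x)\<^sup>2 + s * (norm y)\<^sup>2 - s * (1 - s) * (norm (y - x))\<^sup>2"
  by (simp add: power2_norm_eq_inner inner_add_left inner_add_right inner_diff_left inner_diff_right
      inner_commute algebra_simps)

lemma convex_fun_imp_strongly_convex_fun_0: "convex_fun \<phi> \<Longrightarrow> strongly_convex_fun 0 \<phi>"
  by (simp add: strongly_convex_fun_def)

lemma strongly_convex_subdiff_ineq:
  assumes sc: "strongly_convex_fun \<nu> \<phi>" and nm: "\<And>x. \<phi> x \<noteq> -\<infinity>" and v: "v \<in> subdiff \<phi> x"
  shows "\<phi> x + ereal (inner v (y - x) + \<nu> / 2 * (norm (y - x))\<^sup>2) \<le> \<phi> y"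
proof (cases "\<phi> y = \<infinity>")
  case False
  have vx: "\<phi> x \<noteq> \<infinity>" "\<And>z. \<phi> x + ereal (inner v (z - x)) \<le> \<phi> z" using v by (auto simp: subdiff_def)
  obtain a where a: "\<phi> x = ereal a" using vx(1) nm[of x] by (cases "\<phi> x") auto
  obtain b where b: "\<phi> y = ereal b" using False nm[of y] by (cases "\<phi> y") auto
  have nu: "\<nu> \<ge> 0" and cv: "convex_fun (\<lambda>x. \<phi> x - ereal (\<nu> / 2 * (norm x)\<^sup>2))"
    using sc by (auto simp: strongly_convex_fun_def)
  define d where "d = y - x"
  have "\<nu> / 2 * (norm d)\<^sup>2 \<le> b - a - inner v d"
  proof (rule le_of_le_add_small_multiple)
    fix s :: real assume s: "0 < s" "s \<le> 1"
    define z where "z = (1 - s) *\<^sub>R x + s *\<^sub>R y"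
    have le: "\<phi> z - ereal (\<nu> / 2 * (norm z)\<^sup>2)
        \<le> ereal ((1 - s) * (a - \<nu> / 2 * (norm x)\<^sup>2) + s * (b - \<nu> / 2 * (norm y)\<^sup>2))"
      unfolding z_def by (rule convex_fun_le_combination[OF cv]) (use a b s in auto)
    then obtain w where w: "\<phi> z = ereal w" using nm[of z] by (cases "\<phi> z") auto
    have "z - x = s *\<^sub>R d" unfolding z_def d_def by (simp add: algebra_simps)
    then have "a + s * inner v d \<le> w" using vx(2)[of z] a w by simp
    moreover have "w - \<nu> / 2 * (norm z)\<^sup>2 \<le> (1 - s) * (a - \<nu> / 2 * (norm x)\<^sup>2) + s * (b - \<nu> / 2 * (norm y)\<^sup>2)"
      using le w by simp
    moreover have "(norm z)\<^sup>2 = (1 - s) * (norm x)\<^sup>2 + s * (norm y)\<^sup>2 - s * (1 - s) * (norm d)\<^sup>2"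
      unfolding z_def d_def by (rule norm_convex_combination_sq)
    ultimately have "s * ((1 - s) * (\<nu> / 2 * (norm d)\<^sup>2)) \<le> s * (b - a - inner v d)"
      by (simp add: field_simps)
    then have "(1 - s) * (\<nu> / 2 * (norm d)\<^sup>2) \<le> b - a - inner v d" using s by simp
    then show "\<nu> / 2 * (norm d)\<^sup>2 \<le> b - a - inner v d + s * (\<nu> / 2 * (norm d)\<^sup>2)"
      by (simp add: left_diff_distrib)
  qed
  then show ?thesis using a b unfolding d_def by simp
qed simp

lemma strongly_convex_subdiff_monotone:
  assumes sc: "strongly_convex_fun \<nu> \<phi>" and nm: "\<And>x. \<phi> x \<noteq> -\<infinity>"
    and v1: "v1 \<in> subdiff \<phi> x1" and v2: "v2 \<in> subdiff \<phi> x2"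
  shows "\<nu> * (norm (x1 - x2))\<^sup>2 \<le> inner (v1 - v2) (x1 - x2)"
proof -
  obtain a1 where a1: "\<phi> x1 = ereal a1" using v1 nm[of x1] by (cases "\<phi> x1") (auto simp: subdiff_def)
  obtain a2 where a2: "\<phi> x2 = ereal a2" using v2 nm[of x2] by (cases "\<phi> x2") (auto simp: subdiff_def)
  show ?thesis
    using strongly_convex_subdiff_ineq[OF sc nm v1, of x2] strongly_convex_subdiff_ineq[OF sc nm v2, of x1]
    by (simp add: a1 a2 norm_minus_commute inner_diff_left inner_diff_right algebra_simps)
qed

lemma conjugate_ge: "ereal (inner x y) - \<phi> x \<le> conjugate \<phi> y"
  unfolding conjugate_def by (rule SUP_upper) simp

lemma conjugate_eq_of_subdiff:
  assumes nm: "\<And>x. \<phi> x \<noteq> -\<infinity>" and v: "v \<in> subdiff \<phi> p" and a: "\<phi> p = ereal a"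
  shows "conjugate \<phi> v = ereal (inner p v - a)"
proof -
  have "ereal (inner x v) - \<phi> x \<le> ereal (inner p v - a)" for x
  proof (cases "\<phi> x")
    case (real b)
    have "\<phi> p + ereal (inner v (x - p)) \<le> \<phi> x" using v by (auto simp: subdiff_def)
    then show ?thesis using a real by (simp add: inner_diff_right inner_commute)
  qed (use nm in auto)
  then show ?thesis
    using conjugate_ge[of p v \<phi>] a unfolding conjugate_def by (intro antisym SUP_least) auto
qed

lemma subdiff_conjugateI:
  assumes nm: "\<And>x. \<phi> x \<noteq> -\<infinity>" and v: "v \<in> subdiff \<phi> p"
  shows "p \<in> subdiff (conjugate \<phi>) v"
proof -
  obtain a where a: "\<phi> p = ereal a" using v nm[of p] by (cases "\<phi> p") (auto simp: subdiff_def)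
  note c = conjugate_eq_of_subdiff[OF nm v a]
  show ?thesis
    unfolding subdiff_def
  proof (intro CollectI conjI allI)
    fix w
    have "conjugate \<phi> v + ereal (inner p (w - v)) = ereal (inner p w) - \<phi> p"
      using c a by (simp add: inner_diff_right)
    also have "\<dots> \<le> conjugate \<phi> w" by (rule conjugate_ge)
    finally show "conjugate \<phi> v + ereal (inner p (w - v)) \<le> conjugate \<phi> w" .
  qed (simp add: c)
qed

lemma conjugate_neq_minf:
  assumes "proper_fun \<phi>"
  shows "conjugate \<phi> y \<noteq> -\<infinity>"
proof -
  obtain x where "\<phi> x \<noteq> \<infinity>" "\<phi> x \<noteq> -\<infinity>" using assms unfolding proper_fun_def by blast
  then obtain a where "\<phi> x = ereal a" by (cases "\<phi> x") auto
  then have "ereal (inner x y - a) \<le> conjugate \<phi> y" using conjugate_ge[of x y \<phi>] by simp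
  then show ?thesis by auto
qed

definition affinely_minorized :: "('a::real_inner \<Rightarrow> ereal) \<Rightarrow> bool" where
  "affinely_minorized \<phi> \<longleftrightarrow> (\<exists>c \<beta>. \<forall>y. ereal (inner c y + \<beta>) \<le> \<phi> y)"

lemma subdiff_imp_affinely_minorized:
  assumes "v \<in> subdiff \<phi> x" and "\<phi> x \<noteq> -\<infinity>"
  shows "affinely_minorized \<phi>"
proof -
  obtain a where a: "\<phi> x = ereal a" using assms by (cases "\<phi> x") (auto simp: subdiff_def)
  have "ereal (inner v y + (a - inner v x)) \<le> \<phi> y" for y
    using assms(1) a by (auto simp: subdiff_def inner_diff_right algebra_simps)
  then show ?thesis unfolding affinely_minorized_def by blast
qed

lemma conjugate_finite_imp_affinely_minorized:
  assumes "conjugate \<phi> u = ereal a" and "\<And>x. \<phi> x \<noteq> -\<infinity>"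
  shows "affinely_minorized \<phi>"
proof -
  have "ereal (inner u y + - a) \<le> \<phi> y" for y
  proof (cases "\<phi> y")
    case (real b)
    then show ?thesis using conjugate_ge[of y u \<phi>] assms(1) by (simp add: inner_commute)
  qed (use assms(2) in auto)
  then show ?thesis unfolding affinely_minorized_def by blast
qed

definition prox_objective :: "real \<Rightarrow> ('a::real_normed_vector \<Rightarrow> ereal) \<Rightarrow> 'a \<Rightarrow> 'a \<Rightarrow> ereal" where
  "prox_objective t \<phi> z y = ereal t * \<phi> y + ereal ((norm (y - z))\<^sup>2 / 2)"

lemma prox_eq_The_minimizer:
  "prox t \<phi> z = (THE p. \<forall>y. prox_objective t \<phi> z p \<le> prox_objective t \<phi> z y)"
  by (simp add: prox_def prox_objective_def)

lemma prox_eqI: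
  assumes t: "t > 0" and nm: "\<And>x. \<phi> x \<noteq> -\<infinity>"
    and p: "(1 / t) *\<^sub>R (z - p) \<in> subdiff \<phi> p"
  shows "prox t \<phi> z = p"
proof -
  obtain a where a: "\<phi> p = ereal a" using p nm[of p] by (cases "\<phi> p") (auto simp: subdiff_def)
  have strict: "prox_objective t \<phi> z p + ereal ((norm (y - p))\<^sup>2 / 2) \<le> prox_objective t \<phi> z y" for y
  proof (cases "\<phi> y")
    case (real b)
    have "\<phi> p + ereal (inner ((1 / t) *\<^sub>R (z - p)) (y - p)) \<le> \<phi> y" using p by (auto simp: subdiff_def)
    then have "a + (1 / t) * inner (z - p) (y - p) \<le> b" using a real by simp
    then have "t * a + inner (z - p) (y - p) \<le> t * b" using t by (simp add: field_simps)
    moreover have "(norm (y - z))\<^sup>2 = (norm (y - p))\<^sup>2 + 2 * inner (z - p) (p - y) + (norm (p - z))\<^sup>2"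
      by (simp add: power2_norm_eq_inner inner_diff_left inner_diff_right inner_commute algebra_simps)
    ultimately show ?thesis
      using a real by (simp add: prox_objective_def inner_diff_right field_simps)
  qed (use nm t in \<open>auto simp: prox_objective_def\<close>)
  show ?thesis unfolding prox_eq_The_minimizer
  proof (rule the_equality)
    show "\<forall>y. prox_objective t \<phi> z p \<le> prox_objective t \<phi> z y"
    proof
      fix y
      have "prox_objective t \<phi> z p \<le> prox_objective t \<phi> z p + ereal ((norm (y - p))\<^sup>2 / 2)"
        by (intro add_increasing2) auto
      then show "prox_objective t \<phi> z p \<le> prox_objective t \<phi> z y" using strict[of y] by (rule order_trans)
    qed
  next
    fix q assume "\<forall>y. prox_objective t \<phi> z q \<le> prox_objective t \<phi> z y"
    then have "prox_objective t \<phi> z p + ereal ((norm (q - p))\<^sup>2 / 2) \<le> prox_objective t \<phi> z p"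
      using strict[of q] by (meson order_trans)
    moreover have "prox_objective t \<phi> z p \<noteq> \<infinity>" "prox_objective t \<phi> z p \<noteq> -\<infinity>"
      using a by (simp_all add: prox_objective_def)
    ultimately have "(norm (q - p))\<^sup>2 \<le> 0"
      by (cases "prox_objective t \<phi> z p") auto
    then show "q = p" by simp
  qed
qed

lemma prox_objective_ge_quadratic:
  assumes minor: "\<And>y. ereal (inner c y + \<beta>) \<le> \<phi> y" and t: "t > 0" and nm: "\<And>x. \<phi> x \<noteq> -\<infinity>"
  shows "ereal (t * \<beta> + t * inner c z - t\<^sup>2 * (norm c)\<^sup>2 / 2 + (norm (y - (z - t *\<^sub>R c)))\<^sup>2 / 2)
    \<le> prox_objective t \<phi> z y"
proof (cases "\<phi> y")
  case (real b)
  have "t * (inner c y + \<beta>) \<le> t * b" using minor[of y] real t by (intro mult_left_mono) auto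
  moreover have "(norm (y - (z - t *\<^sub>R c)))\<^sup>2
      = (norm (y - z))\<^sup>2 + 2 * t * inner c y - 2 * t * inner c z + t\<^sup>2 * (norm c)\<^sup>2"
    by (simp add: power2_norm_eq_inner inner_add_left inner_add_right inner_diff_left
        inner_diff_right inner_commute algebra_simps) (simp add: power2_eq_square)
  ultimately show ?thesis using real unfolding prox_objective_def by (simp add: field_simps)
qed (use nm t in \<open>auto simp: prox_objective_def\<close>)

lemma closed_epigraph_le_of_tendsto:
  assumes "closed (epigraph \<phi>)" "ys \<longlonglongrightarrow> l" "b \<longlonglongrightarrow> \<beta>" "\<And>n. \<phi> (ys n) \<le> ereal (b n)"
  shows "\<phi> l \<le> ereal \<beta>"
proof -
  have "(l, \<beta>) \<in> epigraph \<phi>"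
    by (intro closed_sequentially[OF assms(1) _ tendsto_Pair[OF assms(2,3)]])
       (use assms(4) in \<open>auto simp: epigraph_def\<close>)
  then show ?thesis by (simp add: epigraph_def)
qed

lemma prox_objective_has_minimizer:
  fixes \<phi> :: "'a::euclidean_space \<Rightarrow> ereal"
  assumes pcc: "pcc \<phi>" and t: "t > 0" and minorized: "affinely_minorized \<phi>"
  shows "\<exists>p. \<forall>y. prox_objective t \<phi> z p \<le> prox_objective t \<phi> z y"
proof -
  have nm: "\<And>x. \<phi> x \<noteq> -\<infinity>" and cl: "closed (epigraph \<phi>)" and "\<exists>x. \<phi> x \<noteq> \<infinity>"
    using pcc by (auto simp: pcc_def proper_fun_def closed_fun_def)
  then obtain y0 where y0: "\<phi> y0 \<noteq> \<infinity>" by blast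
  obtain c \<beta> where minor: "\<And>y. ereal (inner c y + \<beta>) \<le> \<phi> y"
    using minorized unfolding affinely_minorized_def by blast
  define F where "F = prox_objective t \<phi> z"
  define m0 where "m0 = t * \<beta> + t * inner c z - t\<^sup>2 * (norm c)\<^sup>2 / 2"
  have lower: "ereal (m0 + (norm (y - (z - t *\<^sub>R c)))\<^sup>2 / 2) \<le> F y" for y
    unfolding F_def m0_def by (rule prox_objective_ge_quadratic[OF minor t nm])
  have "(INF y. F y) \<le> F y0" by (rule INF_lower) simp
  moreover have "F y0 \<noteq> \<infinity>" using y0 nm[of y0] unfolding F_def prox_objective_def by (cases "\<phi> y0") auto
  moreover have "ereal m0 \<le> (INF y. F y)"
    using lower by (intro INF_greatest) (meson ereal_less_eq(3) order_trans le_add_same_cancel1 zero_le_divide_iff zero_le_numeral zero_le_power2)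
  ultimately obtain m where m: "(INF y. F y) = ereal m" by (cases "INF y. F y") auto
  have "\<exists>y. F y < ereal (m + inverse (real (Suc n)))" for n
  proof -
    have "(INF y. F y) < ereal (m + inverse (real (Suc n)))" using m by simp
    then show ?thesis by (simp add: INF_less_iff)
  qed
  then obtain ys where ys: "\<And>n. F (ys n) < ereal (m + inverse (real (Suc n)))" by metis
  have "\<phi> (ys n) \<noteq> \<infinity>" for n
  proof
    assume "\<phi> (ys n) = \<infinity>" then show False using ys[of n] t by (simp add: F_def prox_objective_def)
  qed
  define a where "a = (\<lambda>n. real_of_ereal (\<phi> (ys n)))"
  have a: "\<phi> (ys n) = ereal (a n)" for n
    using \<open>\<phi> (ys n) \<noteq> \<infinity>\<close> nm[of "ys n"] unfolding a_def by (cases "\<phi> (ys n)") auto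
  have bounded: "ys n \<in> cball (z - t *\<^sub>R c) (sqrt (2 * (m + 1 - m0)))" for n
  proof -
    have "m0 + (norm (ys n - (z - t *\<^sub>R c)))\<^sup>2 / 2 < m + inverse (real (Suc n))"
      using le_less_trans[OF lower ys] by simp
    moreover have "inverse (real (Suc n)) \<le> 1" by (simp add: field_simps)
    ultimately have "(norm (ys n - (z - t *\<^sub>R c)))\<^sup>2 \<le> 2 * (m + 1 - m0)" by simp
    then show ?thesis by (simp add: dist_norm norm_minus_commute real_le_rsqrt)
  qed
  obtain l r where r: "strict_mono r" and "(ys \<circ> r) \<longlonglongrightarrow> l"
    using compact_imp_seq_compact[OF compact_cball] bounded by (metis seq_compactE)
  then have lim: "(\<lambda>n. ys (r n)) \<longlonglongrightarrow> l" by (simp add: o_def)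
  define bound where "bound = (\<lambda>n. (m + inverse (real (Suc n)) - (norm (ys n - z))\<^sup>2 / 2) / t)"
  have le_bound: "\<phi> (ys (r n)) \<le> ereal (bound (r n))" for n
  proof -
    have "t * a (r n) \<le> m + inverse (real (Suc (r n))) - (norm (ys (r n) - z))\<^sup>2 / 2"
      using ys[of "r n"] a[of "r n"] by (simp add: F_def prox_objective_def)
    then have "a (r n) \<le> bound (r n)" unfolding bound_def using t by (simp add: pos_le_divide_eq mult.commute)
    then show ?thesis using a[of "r n"] by simp
  qed
  have "(\<lambda>n. inverse (real (Suc (r n)))) \<longlonglongrightarrow> 0"
    using LIMSEQ_subseq_LIMSEQ[OF LIMSEQ_inverse_real_of_nat r] by (simp add: o_def)
  then have "(\<lambda>n. bound (r n)) \<longlonglongrightarrow> (m + 0 - (norm (l - z))\<^sup>2 / 2) / t"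
    unfolding bound_def by (intro tendsto_intros lim) (use t in auto)
  from closed_epigraph_le_of_tendsto[OF cl lim this le_bound]
  have "\<phi> l \<le> ereal ((m - (norm (l - z))\<^sup>2 / 2) / t)" by simp
  then have "F l \<le> ereal m"
    using t nm[of l] by (cases "\<phi> l") (auto simp: F_def prox_objective_def field_simps)
  moreover have "ereal m \<le> F y" for y using m by (metis INF_lower UNIV_I)
  ultimately have "F l \<le> F y" for y by (meson order_trans)
  then show ?thesis unfolding F_def by blast
qed

lemma prox_objective_minimizer_subdiff:
  assumes convex: "convex_fun \<phi>" and nm: "\<And>x. \<phi> x \<noteq> -\<infinity>" and t: "t > 0"
    and finite: "\<phi> p \<noteq> \<infinity>" and minimizer: "\<And>y. prox_objective t \<phi> z p \<le> prox_objective t \<phi> z y"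
  shows "(1 / t) *\<^sub>R (z - p) \<in> subdiff \<phi> p"
  unfolding subdiff_def
proof (intro CollectI conjI allI)
  obtain a where a: "\<phi> p = ereal a" using finite nm[of p] by (cases "\<phi> p") auto
  fix y
  show "\<phi> p + ereal (inner ((1 / t) *\<^sub>R (z - p)) (y - p)) \<le> \<phi> y"
  proof (cases "\<phi> y")
    case (real b)
    have "0 \<le> t * (b - a) + inner (p - z) (y - p)"
    proof (rule le_of_le_add_small_multiple)
      fix s :: real assume s: "0 < s" "s \<le> 1"
      define w where "w = (1 - s) *\<^sub>R p + s *\<^sub>R y"
      have "\<phi> w \<le> ereal ((1 - s) * a + s * b)"
        unfolding w_def by (rule convex_fun_le_combination[OF convex a real]) (use s in auto)
      moreover have "prox_objective t \<phi> z p \<le> prox_objective t \<phi> z w" by (rule minimizer)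
      ultimately have "t * a + (norm (p - z))\<^sup>2 / 2 \<le> t * ((1 - s) * a + s * b) + (norm (w - z))\<^sup>2 / 2"
        using a nm[of w] t
        by (cases "\<phi> w") (auto simp: prox_objective_def intro: order_trans add_right_mono mult_left_mono)
      moreover have "w - z = (p - z) + s *\<^sub>R (y - p)" unfolding w_def by (simp add: algebra_simps)
      then have "(norm (w - z))\<^sup>2 = (norm (p - z))\<^sup>2 + 2 * s * inner (p - z) (y - p) + s\<^sup>2 * (norm (y - p))\<^sup>2"
        by (simp only: power2_norm_eq_inner inner_add_left inner_add_right inner_scaleR_left
            inner_scaleR_right inner_commute[of "y - p" "p - z"]) (simp add: algebra_simps power2_eq_square)
      ultimately have "0 \<le> s * (t * (b - a) + inner (p - z) (y - p) + s * ((norm (y - p))\<^sup>2 / 2))"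
        by (simp add: field_simps power2_eq_square)
      then show "0 \<le> t * (b - a) + inner (p - z) (y - p) + s * ((norm (y - p))\<^sup>2 / 2)"
        using s by (simp add: zero_le_mult_iff)
    qed
    then have "a + (1 / t) * inner (z - p) (y - p) \<le> b"
      using t by (simp add: field_simps inner_diff_left)
    then show ?thesis using a real by simp
  qed (use a nm in auto)
qed (use finite in simp)

lemma prox_subdiff:
  fixes \<phi> :: "'a::euclidean_space \<Rightarrow> ereal"
  assumes pcc: "pcc \<phi>" and t: "t > 0" and minorized: "affinely_minorized \<phi>"
  shows "(1 / t) *\<^sub>R (z - prox t \<phi> z) \<in> subdiff \<phi> (prox t \<phi> z)"
proof -
  have nm: "\<And>x. \<phi> x \<noteq> -\<infinity>" and convex: "convex_fun \<phi>" and "\<exists>x. \<phi> x \<noteq> \<infinity>"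
    using pcc by (auto simp: pcc_def proper_fun_def)
  then obtain y0 where y0: "\<phi> y0 \<noteq> \<infinity>" by blast
  obtain p where p: "\<And>y. prox_objective t \<phi> z p \<le> prox_objective t \<phi> z y"
    using prox_objective_has_minimizer[OF pcc t minorized] by blast
  have "\<phi> p \<noteq> \<infinity>"
  proof
    assume "\<phi> p = \<infinity>"
    then have "prox_objective t \<phi> z p = \<infinity>" using t by (simp add: prox_objective_def)
    moreover have "prox_objective t \<phi> z y0 \<noteq> \<infinity>"
      using y0 nm[of y0] by (cases "\<phi> y0") (auto simp: prox_objective_def)
    ultimately show False using p[of y0] by simp
  qed
  then have "(1 / t) *\<^sub>R (z - p) \<in> subdiff \<phi> p"
    by (rule prox_objective_minimizer_subdiff[OF convex nm t _ p])
  moreover from this have "prox t \<phi> z = p" by (rule prox_eqI[OF t nm])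
  ultimately show ?thesis by simp
qed

lemma prox_nonexpansive:
  fixes \<phi> :: "'a::euclidean_space \<Rightarrow> ereal"
  assumes pcc: "pcc \<phi>" and t: "t > 0" and minorized: "affinely_minorized \<phi>"
  shows "norm (prox t \<phi> z1 - prox t \<phi> z2) \<le> norm (z1 - z2)"
proof -
  define p1 p2 where "p1 = prox t \<phi> z1" and "p2 = prox t \<phi> z2"
  have "strongly_convex_fun 0 \<phi>" and nm: "\<And>x. \<phi> x \<noteq> -\<infinity>"
    using pcc by (auto simp: pcc_def proper_fun_def intro: convex_fun_imp_strongly_convex_fun_0)
  from strongly_convex_subdiff_monotone[OF this prox_subdiff[OF pcc t minorized] prox_subdiff[OF pcc t minorized]]
  have "0 \<le> inner ((1 / t) *\<^sub>R ((z1 - z2) - (p1 - p2))) (p1 - p2)"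
    unfolding p1_def p2_def by (simp add: algebra_simps)
  then have "inner (p1 - p2) (p1 - p2) \<le> inner (z1 - z2) (p1 - p2)"
    using t by (simp add: inner_diff_left zero_le_divide_iff)
  also have "\<dots> \<le> norm (z1 - z2) * norm (p1 - p2)" by (rule norm_cauchy_schwarz)
  finally have "norm (p1 - p2) * norm (p1 - p2) \<le> norm (z1 - z2) * norm (p1 - p2)"
    by (simp add: power2_norm_eq_inner[symmetric] power2_eq_square)
  then show ?thesis unfolding p1_def p2_def
    by (cases "norm (p1 - p2) = 0") (auto simp: p1_def p2_def)
qed

text \<open>Fenchel inversion, obtained from the prox of \<open>h\<close> at \<open>x + u\<close>: its point \<open>p\<close> lies in
  \<open>\<partial>h\<^sup>*(x + u - p)\<close>, so monotonicity of \<open>\<partial>h\<^sup>*\<close> forces \<open>p = x\<close>.\<close>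

lemma subdiff_of_subdiff_conjugate:
  fixes h :: "'a::euclidean_space \<Rightarrow> ereal"
  assumes pcc: "pcc h" and minorized: "affinely_minorized h"
    and sc: "strongly_convex_fun \<nu> (conjugate h)" and x: "x \<in> subdiff (conjugate h) u"
  shows "u \<in> subdiff h x"
proof -
  have nm: "\<And>x. h x \<noteq> -\<infinity>" and proper: "proper_fun h" using pcc by (auto simp: pcc_def proper_fun_def)
  have \<nu>: "\<nu> \<ge> 0" using sc by (simp add: strongly_convex_fun_def)
  define p where "p = prox 1 h (x + u)"
  have p: "x + u - p \<in> subdiff h p" using prox_subdiff[OF pcc _ minorized, of 1 "x + u"] by (simp add: p_def)
  have "\<nu> * (norm (x + u - p - u))\<^sup>2 \<le> inner (x + u - p - u) (p - x)"
    using strongly_convex_subdiff_monotone[OF sc conjugate_neq_minf[OF proper] subdiff_conjugateI[OF nm p] x]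
    by (simp add: inner_commute)
  moreover have "inner (x + u - p - u) (p - x) = - inner (p - x) (p - x)"
    by (simp add: inner_diff_left inner_diff_right inner_commute)
  ultimately have "inner (p - x) (p - x) \<le> 0"
    using \<nu> by (metis neg_0_le_iff_le order.trans mult_nonneg_nonneg zero_le_power2)
  then have "p = x" using inner_gt_zero_iff[of "p - x"] by fastforce
  then show ?thesis using p by simp
qed

section \<open>One noiseless step of RandProx-DY\<close>

lemma dy_step_lyapunov_identity:
  fixes a b e :: "'a::real_inner"
  assumes "\<gamma> > 0" "\<Omega> > 0"
  defines "\<tau> \<equiv> \<gamma> * \<Omega>"
  shows "(1 / \<gamma>) * ((norm (a - (1 / \<Omega>) *\<^sub>R (a - b)))\<^sup>2 + (\<Omega> - 1) * (norm (a - b))\<^sup>2 / \<Omega>\<^sup>2)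
       + \<Omega> * (\<tau> + 2 * \<mu>) * ((norm (e + (1 / (\<tau> * \<Omega>)) *\<^sub>R (a - b)))\<^sup>2
                            + (\<Omega> - 1) * (norm (a - b))\<^sup>2 / (\<tau> * \<Omega>)\<^sup>2)
     = (norm a)\<^sup>2 / \<gamma> + 2 * inner e a + (\<Omega> * (\<tau> + 2 * \<mu>) - 2 * \<mu>) * (norm e)\<^sup>2
       - 2 * (inner b (e + (1 / \<tau>) *\<^sub>R (a - b)) - \<mu> * (norm (e + (1 / \<tau>) *\<^sub>R (a - b)))\<^sup>2)"
  using assms unfolding power2_norm_eq_inner
  by (simp add: inner_add_left inner_add_right inner_diff_left inner_diff_right inner_commute)
     (simp add: field_simps power2_eq_square)

locale randprox_dy =
  fixes f :: "'a::euclidean_space \<Rightarrow> real" and gradf :: "'a \<Rightarrow> 'a"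
    and g h :: "'a \<Rightarrow> ereal" and Lf muf mug muh \<gamma> om :: real and xs us :: 'a
  assumes f_grad: "\<And>y. (f has_derivative (\<lambda>v. inner (gradf y) v)) (at y)"
    and f_smooth: "\<And>y z. norm (gradf y - gradf z) \<le> Lf * norm (y - z)"
    and f_sc: "muf \<ge> 0" "convex_on UNIV (\<lambda>y. f y - muf / 2 * (norm y)\<^sup>2)"
    and g_pcc: "pcc g" and h_pcc: "pcc h"
    and g_sc: "strongly_convex_fun mug g"
    and h_sc: "strongly_convex_fun muh (conjugate h)"
    and gamma_pos: "\<gamma> > 0" and om_nonneg: "om \<ge> 0"
    and kkt_g: "- gradf xs - us \<in> subdiff g xs" and kkt_h: "xs \<in> subdiff (conjugate h) us"
begin

lemma g_neq_minf: "g x \<noteq> -\<infinity>" and h_neq_minf: "h x \<noteq> -\<infinity>"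
  using g_pcc h_pcc by (auto simp: pcc_def proper_fun_def)

lemma conjugate_h_neq_minf: "conjugate h x \<noteq> -\<infinity>"
  using h_pcc by (intro conjugate_neq_minf) (simp add: pcc_def)

lemma mug_nonneg: "mug \<ge> 0" and muh_nonneg: "muh \<ge> 0"
  using g_sc h_sc by (simp_all add: strongly_convex_fun_def)

lemma Lf_nonneg: "Lf \<ge> 0"
  using f_smooth by (rule lipschitz_const_nonneg)

lemma muf_le_Lf: "muf \<le> Lf"
  by (rule strong_convexity_le_lipschitz_const[OF f_grad f_smooth f_sc(2)])

lemma g_minorized: "affinely_minorized g"
  using kkt_g g_neq_minf by (rule subdiff_imp_affinely_minorized)

lemma h_minorized: "affinely_minorized h"
proof -
  obtain a where "conjugate h us = ereal a"
    using kkt_h conjugate_h_neq_minf[of us] by (cases "conjugate h us") (auto simp: subdiff_def)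
  then show ?thesis using h_neq_minf by (rule conjugate_finite_imp_affinely_minorized)
qed

lemma us_subdiff_h: "us \<in> subdiff h xs"
  by (rule subdiff_of_subdiff_conjugate[OF h_pcc h_minorized h_sc kkt_h])

lemma step_pos: "\<gamma> * (1 + om) > 0"
  using gamma_pos om_nonneg by simp

lemma dy_xhat_subdiff:
  "(1 / \<gamma>) *\<^sub>R ((x - \<gamma> *\<^sub>R gradf x - \<gamma> *\<^sub>R u) - dy_xhat \<gamma> gradf g x u) \<in> subdiff g (dy_xhat \<gamma> gradf g x u)"
  unfolding dy_xhat_def by (rule prox_subdiff[OF g_pcc gamma_pos g_minorized])

lemma dy_res_subdiff:
  "(1 / (\<gamma> * (1 + om))) *\<^sub>R ((z + (\<gamma> * (1 + om)) *\<^sub>R u) - (z - dy_res \<gamma> om h z u))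
     \<in> subdiff h (z - dy_res \<gamma> om h z u)"
  unfolding dy_res_def using prox_subdiff[OF h_pcc step_pos h_minorized] by simp

lemma dy_xhat_fixed_point: "dy_xhat \<gamma> gradf g xs us = xs"
  unfolding dy_xhat_def
proof (rule prox_eqI[OF gamma_pos g_neq_minf])
  have "(1 / \<gamma>) *\<^sub>R (xs - \<gamma> *\<^sub>R gradf xs - \<gamma> *\<^sub>R us - xs) = - gradf xs - us"
    using gamma_pos by (simp add: algebra_simps)
  then show "(1 / \<gamma>) *\<^sub>R (xs - \<gamma> *\<^sub>R gradf xs - \<gamma> *\<^sub>R us - xs) \<in> subdiff g xs" using kkt_g by simp
qed

lemma dy_res_fixed_point: "dy_res \<gamma> om h xs us = 0"
proof -
  have "prox (\<gamma> * (1 + om)) h (xs + (\<gamma> * (1 + om)) *\<^sub>R us) = xs"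
  proof (rule prox_eqI[OF step_pos h_neq_minf])
    show "(1 / (\<gamma> * (1 + om))) *\<^sub>R (xs + (\<gamma> * (1 + om)) *\<^sub>R us - xs) \<in> subdiff h xs"
      using us_subdiff_h gamma_pos om_nonneg by simp
  qed
  then show ?thesis unfolding dy_res_def by simp
qed

lemma dy_xhat_lipschitz:
  "norm (dy_xhat \<gamma> gradf g x u - dy_xhat \<gamma> gradf g x' u')
     \<le> (1 + \<gamma> * Lf) * norm (x - x') + \<gamma> * norm (u - u')"
proof -
  have "norm (dy_xhat \<gamma> gradf g x u - dy_xhat \<gamma> gradf g x' u')
      \<le> norm ((x - \<gamma> *\<^sub>R gradf x - \<gamma> *\<^sub>R u) - (x' - \<gamma> *\<^sub>R gradf x' - \<gamma> *\<^sub>R u'))"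
    unfolding dy_xhat_def by (rule prox_nonexpansive[OF g_pcc gamma_pos g_minorized])
  also have "(x - \<gamma> *\<^sub>R gradf x - \<gamma> *\<^sub>R u) - (x' - \<gamma> *\<^sub>R gradf x' - \<gamma> *\<^sub>R u')
      = (x - x') - \<gamma> *\<^sub>R (gradf x - gradf x') - \<gamma> *\<^sub>R (u - u')"
    by (simp add: algebra_simps)
  also have "norm \<dots> \<le> norm (x - x') + norm (\<gamma> *\<^sub>R (gradf x - gradf x')) + norm (\<gamma> *\<^sub>R (u - u'))"
    using norm_triangle_ineq4[of "(x - x') - \<gamma> *\<^sub>R (gradf x - gradf x')" "\<gamma> *\<^sub>R (u - u')"]
      norm_triangle_ineq4[of "x - x'" "\<gamma> *\<^sub>R (gradf x - gradf x')"] by linarith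
  also have "\<dots> \<le> norm (x - x') + \<gamma> * (Lf * norm (x - x')) + \<gamma> * norm (u - u')"
    using gamma_pos f_smooth[of x x'] by (simp add: mult_left_mono)
  finally show ?thesis by (simp add: algebra_simps)
qed

lemma dy_res_lipschitz:
  "norm (dy_res \<gamma> om h z u - dy_res \<gamma> om h z' u') \<le> 2 * norm (z - z') + \<gamma> * (1 + om) * norm (u - u')"
proof -
  let ?t = "\<gamma> * (1 + om)"
  let ?p = "\<lambda>z u. prox ?t h (z + ?t *\<^sub>R u)"
  have "norm (?p z u - ?p z' u') \<le> norm ((z + ?t *\<^sub>R u) - (z' + ?t *\<^sub>R u'))"
    by (rule prox_nonexpansive[OF h_pcc step_pos h_minorized])
  also have "(z + ?t *\<^sub>R u) - (z' + ?t *\<^sub>R u') = (z - z') + ?t *\<^sub>R (u - u')"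
    by (simp add: algebra_simps)
  also have "norm \<dots> \<le> norm (z - z') + ?t * norm (u - u')"
    using norm_triangle_ineq[of "z - z'" "?t *\<^sub>R (u - u')"] step_pos by simp
  finally have "norm (?p z u - ?p z' u') \<le> norm (z - z') + ?t * norm (u - u')" .
  moreover have "dy_res \<gamma> om h z u - dy_res \<gamma> om h z' u' = (z - z') - (?p z u - ?p z' u')"
    unfolding dy_res_def by (simp add: algebra_simps)
  ultimately show ?thesis
    using norm_triangle_ineq4[of "z - z'" "?p z u - ?p z' u'"] by simp
qed

definition rate :: real where
  "rate = max ((1 - \<gamma> * muf)\<^sup>2 / (1 + \<gamma> * mug))
           (max ((\<gamma> * Lf - 1)\<^sup>2 / (1 + \<gamma> * mug))
                (1 - (2 / \<gamma> * muh) / ((1 + om) * (1 + om + 2 / \<gamma> * muh))))"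

lemma dy_xhat_bound:
  fixes x u :: 'a
  defines "xh \<equiv> dy_xhat \<gamma> gradf g x u"
  shows "(norm (xh - xs))\<^sup>2 / \<gamma> + 2 * inner (u - us) (xh - xs) \<le> rate * ((norm (x - xs))\<^sup>2 / \<gamma>)"
proof -
  define a e n where "a = xh - xs" and "e = u - us" and "n = 1 + \<gamma> * mug"
  define \<delta> where "\<delta> = (x - \<gamma> *\<^sub>R gradf x) - (xs - \<gamma> *\<^sub>R gradf xs)"
  have n: "n \<ge> 1" using gamma_pos mug_nonneg by (simp add: n_def)
  have "mug * (norm a)\<^sup>2 \<le> inner ((1 / \<gamma>) *\<^sub>R ((x - \<gamma> *\<^sub>R gradf x - \<gamma> *\<^sub>R u) - xh) - (- gradf xs - us)) a"
    unfolding a_def xh_def by (rule strongly_convex_subdiff_monotone[OF g_sc g_neq_minf dy_xhat_subdiff kkt_g])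
  also have "(1 / \<gamma>) *\<^sub>R ((x - \<gamma> *\<^sub>R gradf x - \<gamma> *\<^sub>R u) - xh) - (- gradf xs - us) = (1 / \<gamma>) *\<^sub>R (\<delta> - \<gamma> *\<^sub>R e - a)"
    unfolding \<delta>_def e_def a_def using gamma_pos by (simp add: algebra_simps)
  finally have "mug * inner a a \<le> (1 / \<gamma>) * (inner \<delta> a - \<gamma> * inner e a - inner a a)"
    by (simp add: power2_norm_eq_inner inner_diff_left)
  then have A: "n * inner a a + \<gamma> * inner e a \<le> inner \<delta> a"
    using gamma_pos by (simp add: n_def field_simps)
  have "0 \<le> inner (\<delta> - n *\<^sub>R a) (\<delta> - n *\<^sub>R a)" by simp
  then have B: "2 * n * inner \<delta> a - n * n * inner a a \<le> inner \<delta> \<delta>"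
    by (simp add: inner_diff_left inner_diff_right inner_commute algebra_simps)
  define \<rho> where "\<rho> = max ((1 - \<gamma> * muf)\<^sup>2) ((\<gamma> * Lf - 1)\<^sup>2)"
  have "n * (inner a a + 2 * \<gamma> * inner e a) \<le> n * (n * inner a a + 2 * \<gamma> * inner e a)"
    using n by (intro mult_left_mono) (auto intro: mult_right_mono[of 1 n, simplified])
  also have "\<dots> = 2 * n * (n * inner a a + \<gamma> * inner e a) - n * n * inner a a"
    by (simp add: algebra_simps)
  also have "\<dots> \<le> 2 * n * inner \<delta> a - n * n * inner a a"
    using A n by simp
  also have "\<dots> \<le> inner \<delta> \<delta>" by (rule B)
  also have "\<dots> \<le> \<rho> * (norm (x - xs))\<^sup>2"
    unfolding \<delta>_def \<rho>_def power2_norm_eq_inner[symmetric] using gamma_pos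
    by (intro gradient_step_contraction[OF f_grad f_smooth f_sc]) auto
  also have "\<dots> \<le> n * (rate * (norm (x - xs))\<^sup>2)"
  proof -
    have "\<rho> \<le> rate * n"
      using n unfolding rate_def n_def \<rho>_def by (auto simp: pos_divide_le_eq max_def split: if_splits)
    then have "\<rho> * (norm (x - xs))\<^sup>2 \<le> rate * n * (norm (x - xs))\<^sup>2" by (simp add: mult_right_mono)
    then show ?thesis by (simp add: algebra_simps)
  qed
  finally have "inner a a + 2 * \<gamma> * inner e a \<le> rate * (norm (x - xs))\<^sup>2" using n by simp
  then have "(inner a a + 2 * \<gamma> * inner e a) / \<gamma> \<le> rate * (norm (x - xs))\<^sup>2 / \<gamma>"
    using gamma_pos by (simp add: divide_right_mono)
  then show ?thesis using gamma_pos unfolding a_def e_def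
    by (simp add: power2_norm_eq_inner add_divide_distrib)
qed

lemma dy_res_bound:
  fixes z u :: 'a
  defines "r \<equiv> dy_res \<gamma> om h z u"
  shows "muh * (norm (u + (1 / (\<gamma> * (1 + om))) *\<^sub>R r - us))\<^sup>2
    \<le> inner (z - r - xs) (u + (1 / (\<gamma> * (1 + om))) *\<^sub>R r - us)"
proof -
  have "(z + (\<gamma> * (1 + om)) *\<^sub>R u) - (z - r) = (\<gamma> * (1 + om)) *\<^sub>R u + r" by simp
  then have "(1 / (\<gamma> * (1 + om))) *\<^sub>R ((z + (\<gamma> * (1 + om)) *\<^sub>R u) - (z - r))
      = u + (1 / (\<gamma> * (1 + om))) *\<^sub>R r"
    using gamma_pos om_nonneg by (simp only: scaleR_add_right scaleR_scaleR) simp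
  then have "u + (1 / (\<gamma> * (1 + om))) *\<^sub>R r \<in> subdiff h (z - r)"
    using dy_res_subdiff[of z u] unfolding r_def by simp
  from strongly_convex_subdiff_monotone[OF h_sc conjugate_h_neq_minf subdiff_conjugateI[OF h_neq_minf this] kkt_h]
  show ?thesis by (simp add: inner_commute)
qed

lemma rate_ge_dual_factor: "(1 + om) * (\<gamma> * (1 + om) + 2 * muh) - 2 * muh \<le> rate * ((1 + om) * (\<gamma> * (1 + om) + 2 * muh))"
proof -
  have K: "(1 + om) * (\<gamma> * (1 + om) + 2 * muh) > 0"
    using gamma_pos om_nonneg muh_nonneg by (simp add: add_pos_nonneg)
  have le: "1 - (2 / \<gamma> * muh) / ((1 + om) * (1 + om + 2 / \<gamma> * muh)) \<le> rate"
    unfolding rate_def by (intro max.coboundedI2) simp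
  have eq: "(2 / \<gamma> * muh) / ((1 + om) * (1 + om + 2 / \<gamma> * muh))
      = 2 * muh / ((1 + om) * (\<gamma> * (1 + om) + 2 * muh))"
    using gamma_pos om_nonneg by (simp add: field_simps)
  from le have "1 - 2 * muh / ((1 + om) * (\<gamma> * (1 + om) + 2 * muh)) \<le> rate" unfolding eq .
  then show ?thesis using K by (simp add: field_simps)
qed

text \<open>The terms with \<open>om\<close> bound the conditional variances of the two noisy updates.\<close>

lemma dy_step_bound:
  fixes x u :: 'a
  defines "xh \<equiv> dy_xhat \<gamma> gradf g x u"
  defines "r \<equiv> dy_res \<gamma> om h xh u"
    and "\<alpha> \<equiv> 1 / (1 + om)" and "\<beta> \<equiv> 1 / (\<gamma> * (1 + om)\<^sup>2)"
    and "K \<equiv> (1 + om) * (\<gamma> * (1 + om) + 2 * muh)"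
  shows "(1 / \<gamma>) * ((norm (xh - \<alpha> *\<^sub>R r - xs))\<^sup>2 + om * \<alpha>\<^sup>2 * (norm r)\<^sup>2)
       + K * ((norm (u + \<beta> *\<^sub>R r - us))\<^sup>2 + om * \<beta>\<^sup>2 * (norm r)\<^sup>2)
     \<le> rate * dy_lyap \<gamma> om muh xs us x u"
proof -
  define \<Omega> \<tau> where "\<Omega> = 1 + om" and "\<tau> = \<gamma> * (1 + om)"
  define a b e where "a = xh - xs" and "b = xh - r - xs" and "e = u - us"
  have \<Omega>: "\<Omega> > 0" using om_nonneg by (simp add: \<Omega>_def)
  have r: "r = a - b" by (simp add: a_def b_def)
  have "xh - \<alpha> *\<^sub>R r - xs = a - (1 / \<Omega>) *\<^sub>R (a - b)"
    by (simp add: a_def b_def \<alpha>_def \<Omega>_def)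
  moreover have "u + \<beta> *\<^sub>R r - us = e + (1 / (\<tau> * \<Omega>)) *\<^sub>R (a - b)"
    by (simp add: r e_def \<beta>_def \<tau>_def \<Omega>_def power2_eq_square mult.assoc algebra_simps)
  moreover have "om * \<alpha>\<^sup>2 = (\<Omega> - 1) / \<Omega>\<^sup>2" "om * \<beta>\<^sup>2 = (\<Omega> - 1) / (\<tau> * \<Omega>)\<^sup>2"
    by (simp_all add: \<alpha>_def \<beta>_def \<Omega>_def \<tau>_def power2_eq_square power_divide)
  moreover have "K = \<Omega> * (\<tau> + 2 * muh)" by (simp add: K_def \<Omega>_def \<tau>_def)
  ultimately have "(1 / \<gamma>) * ((norm (xh - \<alpha> *\<^sub>R r - xs))\<^sup>2 + om * \<alpha>\<^sup>2 * (norm r)\<^sup>2)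
       + K * ((norm (u + \<beta> *\<^sub>R r - us))\<^sup>2 + om * \<beta>\<^sup>2 * (norm r)\<^sup>2)
     = (norm a)\<^sup>2 / \<gamma> + 2 * inner e a + (K - 2 * muh) * (norm e)\<^sup>2
       - 2 * (inner b (e + (1 / \<tau>) *\<^sub>R (a - b)) - muh * (norm (e + (1 / \<tau>) *\<^sub>R (a - b)))\<^sup>2)"
    using dy_step_lyapunov_identity[OF gamma_pos \<Omega>, where a=a and b=b and e=e and \<mu>=muh] unfolding r \<tau>_def \<Omega>_def
    by (simp add: mult.commute)
  also have "\<dots> \<le> rate * ((norm (x - xs))\<^sup>2 / \<gamma>) + rate * (K * (norm e)\<^sup>2)"
  proof -
    define w where "w = e + (1 / \<tau>) *\<^sub>R (a - b)"
    have "(norm a)\<^sup>2 / \<gamma> + 2 * inner e a \<le> rate * ((norm (x - xs))\<^sup>2 / \<gamma>)"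
      using dy_xhat_bound[of x u] by (simp add: a_def e_def xh_def)
    moreover have "(K - 2 * muh) * (norm e)\<^sup>2 \<le> rate * (K * (norm e)\<^sup>2)"
      using mult_right_mono[OF rate_ge_dual_factor, of "(norm e)\<^sup>2"] by (simp add: K_def mult.assoc)
    moreover have "muh * (norm w)\<^sup>2 \<le> inner b w"
    proof -
      have "u + (1 / (\<gamma> * (1 + om))) *\<^sub>R r - us = w"
        unfolding w_def r[symmetric] e_def \<tau>_def by (simp add: algebra_simps)
      then show ?thesis
        using dy_res_bound[where z=xh and u=u] unfolding r_def[symmetric] by (simp add: b_def)
    qed
    ultimately show ?thesis unfolding w_def[symmetric] by argo
  qed
  also have "\<dots> = rate * dy_lyap \<gamma> om muh xs us x u"
    by (simp add: dy_lyap_def K_def e_def algebra_simps)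
  finally show ?thesis .
qed

lemma primal_minimizer_unique:
  assumes opt: "\<And>y. ereal (f x') + g x' + h x' \<le> ereal (f y) + g y + h y"
    and mu_pos: "muf > 0 \<or> mug > 0"
  shows "x' = xs"
proof -
  obtain gs where gs: "g xs = ereal gs" using kkt_g g_neq_minf[of xs] by (cases "g xs") (auto simp: subdiff_def)
  obtain hs where hs: "h xs = ereal hs" using us_subdiff_h h_neq_minf[of xs] by (cases "h xs") (auto simp: subdiff_def)
  have le: "ereal (f x') + g x' + h x' \<le> ereal (f xs + gs + hs)" using opt[of xs] gs hs by simp
  then have "g x' \<noteq> \<infinity>" using h_neq_minf[of x'] by auto
  then obtain gx where gx: "g x' = ereal gx" using g_neq_minf[of x'] by (cases "g x'") auto
  have "h x' \<noteq> \<infinity>" using le gx by auto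
  then obtain hx where hx: "h x' = ereal hx" using h_neq_minf[of x'] by (cases "h x'") auto
  have "f xs + inner (gradf xs) (x' - xs) + muf / 2 * (norm (x' - xs))\<^sup>2 \<le> f x'"
    by (rule strongly_convex_gradient_ineq[OF f_grad f_sc(2)])
  moreover have "gs + (inner (- gradf xs - us) (x' - xs) + mug / 2 * (norm (x' - xs))\<^sup>2) \<le> gx"
    using strongly_convex_subdiff_ineq[OF g_sc g_neq_minf kkt_g, of x'] gs gx by simp
  moreover have "hs + inner us (x' - xs) \<le> hx"
    using strongly_convex_subdiff_ineq[OF _ h_neq_minf us_subdiff_h, of 0 x'] h_pcc hs hx
    by (simp add: pcc_def convex_fun_imp_strongly_convex_fun_0)
  moreover have "f x' + gx + hx \<le> f xs + gs + hs" using le gx hx by simp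
  ultimately have "(muf + mug) / 2 * (norm (x' - xs))\<^sup>2 \<le> 0"
    by (simp add: inner_diff_left field_simps)
  moreover have "muf + mug > 0" using mu_pos f_sc(1) mug_nonneg by auto
  ultimately show ?thesis by (simp add: mult_le_0_iff)
qed

lemma dual_minimizer_unique:
  assumes opt: "\<And>v. conjugate (\<lambda>y. ereal (f y) + g y) (- u') + conjugate h u'
                      \<le> conjugate (\<lambda>y. ereal (f y) + g y) (- v) + conjugate h v"
    and muh_pos: "muh > 0"
  shows "u' = us"
proof -
  define \<phi> where "\<phi> = (\<lambda>y. ereal (f y) + g y)"
  obtain gs where gs: "g xs = ereal gs" using kkt_g g_neq_minf[of xs] by (cases "g xs") (auto simp: subdiff_def)
  obtain hs where hs: "h xs = ereal hs" using us_subdiff_h h_neq_minf[of xs] by (cases "h xs") (auto simp: subdiff_def)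
  have \<phi>_nm: "\<phi> x \<noteq> -\<infinity>" for x using g_neq_minf[of x] unfolding \<phi>_def by auto
  have \<phi>s: "\<phi> xs = ereal (f xs + gs)" unfolding \<phi>_def using gs by simp
  have sub: "- us \<in> subdiff \<phi> xs"
    unfolding subdiff_def
  proof (intro CollectI conjI allI)
    fix y
    have "f xs + inner (gradf xs) (y - xs) + muf / 2 * (norm (y - xs))\<^sup>2 \<le> f y"
      by (rule strongly_convex_gradient_ineq[OF f_grad f_sc(2)])
    then have "f xs + inner (gradf xs) (y - xs) \<le> f y"
      using f_sc(1) by (smt (verit) mult_nonneg_nonneg zero_le_power2 divide_nonneg_pos)
    moreover have "g xs + ereal (inner (- gradf xs - us) (y - xs)) \<le> g y"
      using kkt_g by (simp add: subdiff_def)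
    ultimately show "\<phi> xs + ereal (inner (- us) (y - xs)) \<le> \<phi> y"
      using gs g_neq_minf[of y] unfolding \<phi>_def by (cases "g y") (auto simp: inner_diff_left)
  qed (simp add: \<phi>s)
  have c\<phi>: "conjugate \<phi> (- us) = ereal (inner xs (- us) - (f xs + gs))"
    by (rule conjugate_eq_of_subdiff[OF \<phi>_nm sub \<phi>s])
  have ch: "conjugate h us = ereal (inner xs us - hs)"
    by (rule conjugate_eq_of_subdiff[OF h_neq_minf us_subdiff_h hs])
  have "ereal (inner xs (- u') - (f xs + gs)) \<le> conjugate \<phi> (- u')"
    using conjugate_ge[of xs "- u'" \<phi>] \<phi>s by simp
  moreover have "ereal (inner xs us - hs + (inner xs (u' - us) + muh / 2 * (norm (u' - us))\<^sup>2)) \<le> conjugate h u'"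
    using strongly_convex_subdiff_ineq[OF h_sc conjugate_h_neq_minf kkt_h, of u'] ch by simp
  moreover have "conjugate \<phi> (- u') + conjugate h u' \<le> ereal (inner xs (- us) - (f xs + gs) + (inner xs us - hs))"
    using opt[of us] c\<phi> ch unfolding \<phi>_def[symmetric] by simp
  ultimately have "ereal (inner xs (- u') - (f xs + gs)) + ereal (inner xs us - hs + (inner xs (u' - us) + muh / 2 * (norm (u' - us))\<^sup>2))
      \<le> ereal (inner xs (- us) - (f xs + gs) + (inner xs us - hs))"
    by (meson add_mono order_trans)
  then have "muh / 2 * (norm (u' - us))\<^sup>2 \<le> 0" by (simp add: inner_diff_right)
  then show ?thesis using muh_pos by (simp add: mult_le_0_iff)
qed

lemma rate_nonneg: "rate \<ge> 0"
proof -
  have "(1 - \<gamma> * muf)\<^sup>2 / (1 + \<gamma> * mug) \<ge> 0" using gamma_pos mug_nonneg by simp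
  then show ?thesis unfolding rate_def by linarith
qed

lemma rate_lt_1:
  assumes mu_pos: "muf > 0 \<or> mug > 0" and muh_pos: "muh > 0" and step: "\<gamma> * Lf < 2"
  shows "rate < 1"
proof -
  have \<gamma>mug: "\<gamma> * mug \<ge> 0" using gamma_pos mug_nonneg by simp
  have sq_lt: "c\<^sup>2 / (1 + \<gamma> * mug) < 1" if "\<bar>c\<bar> < 1 \<or> (\<bar>c\<bar> \<le> 1 \<and> mug > 0)" for c :: real
  proof -
    have "c\<^sup>2 \<le> 1" "c\<^sup>2 < 1 \<or> mug > 0" using that by (auto simp: abs_square_le_1 abs_square_less_1)
    moreover have "mug > 0 \<Longrightarrow> \<gamma> * mug > 0" using gamma_pos by simp
    ultimately have "c\<^sup>2 < 1 + \<gamma> * mug" using \<gamma>mug by linarith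
    then show ?thesis using \<gamma>mug by simp
  qed
  have "\<gamma> * muf \<le> \<gamma> * Lf" "0 \<le> \<gamma> * muf" "muf > 0 \<Longrightarrow> 0 < \<gamma> * muf"
    using muf_le_Lf gamma_pos f_sc(1) by simp_all
  then have "\<bar>1 - \<gamma> * muf\<bar> \<le> 1" "muf > 0 \<Longrightarrow> \<bar>1 - \<gamma> * muf\<bar> < 1" using step by auto
  then have "(1 - \<gamma> * muf)\<^sup>2 / (1 + \<gamma> * mug) < 1"
    using mu_pos by (intro sq_lt) auto
  moreover have "(\<gamma> * Lf - 1)\<^sup>2 / (1 + \<gamma> * mug) < 1"
  proof (intro sq_lt)
    show "\<bar>\<gamma> * Lf - 1\<bar> < 1 \<or> \<bar>\<gamma> * Lf - 1\<bar> \<le> 1 \<and> mug > 0"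
      using mu_pos muf_le_Lf Lf_nonneg f_sc(1) gamma_pos step
      by (cases "Lf = 0") (auto simp: abs_if)
  qed
  moreover have "(2 / \<gamma> * muh) / ((1 + om) * (1 + om + 2 / \<gamma> * muh)) > 0"
    using gamma_pos muh_pos om_nonneg by (simp add: add_pos_pos)
  ultimately show ?thesis unfolding rate_def by simp
qed

end

section \<open>Conditionally unbiased noise\<close>

lemma integrable_of_le_norm_mult:
  fixes W D :: "'s \<Rightarrow> 'a::real_normed_vector" and \<phi> :: "'s \<Rightarrow> real"
  assumes "\<phi> \<in> borel_measurable M"
    and "integrable M (\<lambda>s. (norm (W s))\<^sup>2)" "integrable M (\<lambda>s. (norm (D s))\<^sup>2)"
    and le: "\<And>s. \<bar>\<phi> s\<bar> \<le> norm (W s) * norm (D s)"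
  shows "integrable M \<phi>"
proof (rule Bochner_Integration.integrable_bound[of _ "\<lambda>s. (norm (W s))\<^sup>2 + (norm (D s))\<^sup>2"])
  show "AE s in M. norm (\<phi> s) \<le> norm ((norm (W s))\<^sup>2 + (norm (D s))\<^sup>2)"
  proof (intro AE_I2)
    fix s
    have "2 * (norm (W s) * norm (D s)) \<le> (norm (W s))\<^sup>2 + (norm (D s))\<^sup>2"
      using sum_squares_bound[of "norm (W s)" "norm (D s)"] by (simp add: mult.assoc)
    moreover have "0 \<le> norm (W s) * norm (D s)" by simp
    ultimately have "norm (W s) * norm (D s) \<le> (norm (W s))\<^sup>2 + (norm (D s))\<^sup>2" by linarith
    then show "norm (\<phi> s) \<le> norm ((norm (W s))\<^sup>2 + (norm (D s))\<^sup>2)" using le[of s] by simp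
  qed
qed (use assms in auto)

lemma integrable_norm_sq_of_diff:
  fixes D r :: "'s \<Rightarrow> 'a::real_normed_vector"
  assumes "D \<in> borel_measurable M" "r \<in> borel_measurable M"
    and "integrable M (\<lambda>s. (norm (r s))\<^sup>2)" "integrable M (\<lambda>s. (norm (D s - r s))\<^sup>2)"
  shows "integrable M (\<lambda>s. (norm (D s))\<^sup>2)"
proof (rule Bochner_Integration.integrable_bound[of _ "\<lambda>s. 2 * (norm (r s))\<^sup>2 + 2 * (norm (D s - r s))\<^sup>2"])
  show "AE s in M. norm ((norm (D s))\<^sup>2) \<le> norm (2 * (norm (r s))\<^sup>2 + 2 * (norm (D s - r s))\<^sup>2)"
  proof (intro AE_I2)
    fix s
    have "norm (D s) \<le> norm (r s) + norm (D s - r s)" using norm_triangle_ineq[of "r s" "D s - r s"] by simp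
    then have "(norm (D s))\<^sup>2 \<le> (norm (r s) + norm (D s - r s))\<^sup>2" by (simp add: power_mono)
    also have "\<dots> \<le> 2 * (norm (r s))\<^sup>2 + 2 * (norm (D s - r s))\<^sup>2"
      using sum_squares_bound[of "norm (r s)" "norm (D s - r s)"] by (simp add: power2_sum)
    finally show "norm ((norm (D s))\<^sup>2) \<le> norm (2 * (norm (r s))\<^sup>2 + 2 * (norm (D s - r s))\<^sup>2)" by simp
  qed
qed (use assms in auto)

lemma gen_filtration_subalgebra:
  fixes x u :: "nat \<Rightarrow> 's \<Rightarrow> 'a::euclidean_space"
  assumes "\<And>i. i \<le> t \<Longrightarrow> (\<lambda>s. (x i s, u i s)) \<in> borel_measurable M"
  shows "subalgebra M (gen_filtration M x u t)"
    and "(\<lambda>s. (x t s, u t s)) \<in> borel_measurable (gen_filtration M x u t)"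
proof -
  define G where "G = {(\<lambda>s. (x i s, u i s)) -` B \<inter> space M | i B. i \<le> t \<and> B \<in> sets (borel :: ('a \<times> 'a) measure)}"
  have "G \<subseteq> Pow (space M)" unfolding G_def by auto
  then have sp: "space (gen_filtration M x u t) = space M"
    and st: "sets (gen_filtration M x u t) = sigma_sets (space M) G"
    unfolding gen_filtration_def G_def[symmetric] by simp_all
  have "G \<subseteq> sets M" unfolding G_def using assms by (auto intro: measurable_sets)
  then show "subalgebra M (gen_filtration M x u t)"
    unfolding subalgebra_def sp st using sets.sigma_sets_subset by simp
  show "(\<lambda>s. (x t s, u t s)) \<in> borel_measurable (gen_filtration M x u t)"
  proof (rule measurableI)
    fix B :: "('a \<times> 'a) set" assume "B \<in> sets borel"
    then have "(\<lambda>s. (x t s, u t s)) -` B \<inter> space M \<in> G" unfolding G_def by blast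
    then show "(\<lambda>s. (x t s, u t s)) -` B \<inter> space (gen_filtration M x u t) \<in> sets (gen_filtration M x u t)"
      unfolding sp st by auto
  qed simp
qed

context
  fixes M F :: "'s measure"
  assumes prob: "prob_space M" and sub: "subalgebra M F"
begin

interpretation prob_space M by (rule prob)
interpretation fs: finite_measure_subalgebra M F by unfold_locales (rule sub)

lemma integral_inner_cond_unbiased:
  fixes W D r :: "'s \<Rightarrow> 'a::euclidean_space"
  assumes W: "W \<in> borel_measurable F" and D: "D \<in> borel_measurable M" and r: "r \<in> borel_measurable M"
    and int_W: "integrable M (\<lambda>s. (norm (W s))\<^sup>2)" and int_D: "integrable M (\<lambda>s. (norm (D s))\<^sup>2)"
    and int_r: "integrable M (\<lambda>s. (norm (r s))\<^sup>2)"
    and unbiased: "\<And>i. i \<in> Basis \<Longrightarrow> AE s in M. real_cond_exp M F (\<lambda>s. inner (D s) i) s = inner (r s) i"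
  shows "integrable M (\<lambda>s. inner (W s) (D s - r s))" and "(\<integral>s. inner (W s) (D s - r s) \<partial>M) = 0"
proof -
  have W': "W \<in> borel_measurable M" by (rule measurable_from_subalg[OF sub W])
  have component_le: "\<bar>inner a i * inner b i\<bar> \<le> norm a * norm b" if "i \<in> Basis" for a b :: 'a and i
    using Basis_le_norm[OF that, of a] Basis_le_norm[OF that, of b] by (simp add: abs_mult mult_mono)
  have int_i: "integrable M (\<lambda>s. inner (W s) i * inner (D s - r s) i)"
    and zero_i: "(\<integral>s. inner (W s) i * inner (D s - r s) i \<partial>M) = 0" if i: "i \<in> Basis" for i
  proof -
    have Wi: "(\<lambda>s. inner (W s) i) \<in> borel_measurable F" using W by measurable
    have Wi': "(\<lambda>s. inner (W s) i) \<in> borel_measurable M" using W' by measurable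
    have Di: "(\<lambda>s. inner (D s) i) \<in> borel_measurable M" using D by measurable
    have ri: "(\<lambda>s. inner (r s) i) \<in> borel_measurable M" using r by measurable
    have intD: "integrable M (\<lambda>s. inner (W s) i * inner (D s) i)"
      using Wi' Di by (intro integrable_of_le_norm_mult[OF _ int_W int_D component_le[OF i]]) simp
    have intr: "integrable M (\<lambda>s. inner (W s) i * inner (r s) i)"
      using Wi' ri by (intro integrable_of_le_norm_mult[OF _ int_W int_r component_le[OF i]]) simp
    have "(\<integral>s. inner (W s) i * inner (D s) i \<partial>M)
        = (\<integral>s. inner (W s) i * real_cond_exp M F (\<lambda>s. inner (D s) i) s \<partial>M)"
      by (rule fs.real_cond_exp_intg(2)[OF intD Wi Di, symmetric])
    also have "\<dots> = (\<integral>s. inner (W s) i * inner (r s) i \<partial>M)"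
    proof (rule integral_cong_AE)
      show "AE s in M. inner (W s) i * real_cond_exp M F (\<lambda>s. inner (D s) i) s = inner (W s) i * inner (r s) i"
        using unbiased[OF i] by eventually_elim simp
      show "(\<lambda>s. inner (W s) i * real_cond_exp M F (\<lambda>s. inner (D s) i) s) \<in> borel_measurable M"
        using W' by measurable
      show "(\<lambda>s. inner (W s) i * inner (r s) i) \<in> borel_measurable M" using W' r by measurable
    qed
    finally show "(\<integral>s. inner (W s) i * inner (D s - r s) i \<partial>M) = 0"
      using intD intr by (simp add: inner_diff_left right_diff_distrib)
    show "integrable M (\<lambda>s. inner (W s) i * inner (D s - r s) i)"
      using intD intr by (simp add: inner_diff_left right_diff_distrib)
  qed
  have sum: "(\<lambda>s. inner (W s) (D s - r s)) = (\<lambda>s. \<Sum>i\<in>Basis. inner (W s) i * inner (D s - r s) i)"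
    by (rule ext) (rule euclidean_inner)
  show "integrable M (\<lambda>s. inner (W s) (D s - r s))"
    unfolding sum by (intro Bochner_Integration.integrable_sum int_i)
  show "(\<integral>s. inner (W s) (D s - r s) \<partial>M) = 0"
    unfolding sum by (subst Bochner_Integration.integral_sum) (use int_i zero_i in auto)
qed

lemma cond_variance_integral_le:
  fixes Z r :: "'s \<Rightarrow> 'a::euclidean_space"
  assumes Z: "Z \<in> borel_measurable M" and int_r: "integrable M (\<lambda>s. (norm (r s))\<^sup>2)" and "om \<ge> 0"
    and variance: "AE s in M. nn_cond_exp M F (\<lambda>s. ennreal ((norm (Z s))\<^sup>2)) s \<le> ennreal (om * (norm (r s))\<^sup>2)"
  shows "integrable M (\<lambda>s. (norm (Z s))\<^sup>2)" and "(\<integral>s. (norm (Z s))\<^sup>2 \<partial>M) \<le> om * (\<integral>s. (norm (r s))\<^sup>2 \<partial>M)"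
proof -
  have "(\<integral>\<^sup>+ s. ennreal ((norm (Z s))\<^sup>2) \<partial>M) = (\<integral>\<^sup>+ s. 1 * nn_cond_exp M F (\<lambda>s. ennreal ((norm (Z s))\<^sup>2)) s \<partial>M)"
    by (subst fs.nn_cond_exp_intg) (use Z in auto)
  also have "\<dots> \<le> (\<integral>\<^sup>+ s. ennreal (om * (norm (r s))\<^sup>2) \<partial>M)"
    by (rule nn_integral_mono_AE) (use variance in auto)
  also have "\<dots> = ennreal (\<integral>s. om * (norm (r s))\<^sup>2 \<partial>M)"
    by (rule nn_integral_eq_integral) (use int_r \<open>om \<ge> 0\<close> in auto)
  finally have le: "(\<integral>\<^sup>+ s. ennreal ((norm (Z s))\<^sup>2) \<partial>M) \<le> ennreal (\<integral>s. om * (norm (r s))\<^sup>2 \<partial>M)" .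
  then show int_Z: "integrable M (\<lambda>s. (norm (Z s))\<^sup>2)"
    by (intro integrableI_nonneg) (use Z in \<open>auto simp: top.not_eq_extremum intro: le_less_trans\<close>)
  have "ennreal (\<integral>s. (norm (Z s))\<^sup>2 \<partial>M) \<le> ennreal (\<integral>s. om * (norm (r s))\<^sup>2 \<partial>M)"
    using le by (subst nn_integral_eq_integral[OF int_Z, symmetric]) auto
  then show "(\<integral>s. (norm (Z s))\<^sup>2 \<partial>M) \<le> om * (\<integral>s. (norm (r s))\<^sup>2 \<partial>M)"
    using \<open>om \<ge> 0\<close> by (simp add: ennreal_le_iff integral_nonneg_AE)
qed

lemma nn_integral_noisy_step_le:
  fixes W D r :: "'s \<Rightarrow> 'a::euclidean_space" and Q P P' :: "'s \<Rightarrow> real"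
  assumes W: "W \<in> borel_measurable F" and r: "r \<in> borel_measurable F"
    and D: "D \<in> borel_measurable M" and Q: "Q \<in> borel_measurable M"
    and int_P: "integrable M P" and P_nonneg: "\<And>s. 0 \<le> P s"
    and W_dom: "\<And>s. (norm (W s))\<^sup>2 \<le> C\<^sub>W * P s" and r_dom: "\<And>s. (norm (r s))\<^sup>2 \<le> C\<^sub>r * P s"
    and "\<kappa> \<ge> 0" "om \<ge> 0" "c \<ge> 0" and Q_nonneg: "\<And>s. 0 \<le> Q s"
    and step: "\<And>s. Q s + \<kappa> * om * (norm (r s))\<^sup>2 \<le> c * P s"
    and unbiased: "\<And>i. i \<in> Basis \<Longrightarrow> AE s in M. real_cond_exp M F (\<lambda>s. inner (D s) i) s = inner (r s) i"
    and variance: "AE s in M. nn_cond_exp M F (\<lambda>s. ennreal ((norm (D s - r s))\<^sup>2)) s \<le> ennreal (om * (norm (r s))\<^sup>2)"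
    and P': "\<And>s. P' s = Q s + 2 * inner (W s) (D s - r s) + \<kappa> * (norm (D s - r s))\<^sup>2"
    and P'_nonneg: "\<And>s. 0 \<le> P' s"
  shows "(\<integral>\<^sup>+ s. P' s \<partial>M) \<le> ennreal c * (\<integral>\<^sup>+ s. P s \<partial>M)"
proof -
  have W': "W \<in> borel_measurable M" and r': "r \<in> borel_measurable M"
    using W r by (simp_all add: measurable_from_subalg[OF sub])
  have int_W: "integrable M (\<lambda>s. (norm (W s))\<^sup>2)"
    by (rule Bochner_Integration.integrable_bound[OF int_P[THEN integrable_mult_right[of C\<^sub>W]]])
       (use W' in \<open>auto intro!: AE_I2 order_trans[OF W_dom abs_ge_self]\<close>)
  have int_r: "integrable M (\<lambda>s. (norm (r s))\<^sup>2)"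
    by (rule Bochner_Integration.integrable_bound[OF int_P[THEN integrable_mult_right[of C\<^sub>r]]])
       (use r' in \<open>auto intro!: AE_I2 order_trans[OF r_dom abs_ge_self]\<close>)
  have Z: "(\<lambda>s. D s - r s) \<in> borel_measurable M" using D r' by measurable
  note var = cond_variance_integral_le[OF Z int_r \<open>om \<ge> 0\<close> variance]
  have int_D: "integrable M (\<lambda>s. (norm (D s))\<^sup>2)"
    using integrable_norm_sq_of_diff[OF D r' int_r var(1)] by simp
  note cross = integral_inner_cond_unbiased[OF W D r' int_W int_D int_r unbiased]
  have int_Q: "integrable M Q"
  proof (rule Bochner_Integration.integrable_bound[OF int_P[THEN integrable_mult_right[of c]]])
    show "AE s in M. norm (Q s) \<le> norm (c * P s)"
      using step Q_nonneg P_nonneg \<open>\<kappa> \<ge> 0\<close> \<open>om \<ge> 0\<close> \<open>c \<ge> 0\<close>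
      by (intro AE_I2) (smt (verit) mult_nonneg_nonneg real_norm_def zero_le_power2)
  qed (rule Q)
  have int_P': "integrable M P'"
    unfolding P'[abs_def] using int_Q cross(1) var(1) by simp
  have "(\<integral>s. P' s \<partial>M) = (\<integral>s. Q s \<partial>M) + 2 * (\<integral>s. inner (W s) (D s - r s) \<partial>M) + \<kappa> * (\<integral>s. (norm (D s - r s))\<^sup>2 \<partial>M)"
    unfolding P'[abs_def] using int_Q cross(1) var(1) by simp
  also have "\<dots> \<le> (\<integral>s. Q s \<partial>M) + \<kappa> * (om * (\<integral>s. (norm (r s))\<^sup>2 \<partial>M))"
    using cross(2) mult_left_mono[OF var(2) \<open>\<kappa> \<ge> 0\<close>] by simp
  also have "\<dots> = (\<integral>s. Q s + \<kappa> * om * (norm (r s))\<^sup>2 \<partial>M)"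
    using int_Q int_r by (simp add: mult.assoc)
  also have "\<dots> \<le> (\<integral>s. c * P s \<partial>M)"
    by (rule integral_mono) (use int_Q int_r int_P step in auto)
  finally have le: "(\<integral>s. P' s \<partial>M) \<le> c * (\<integral>s. P s \<partial>M)" by simp
  have "(\<integral>\<^sup>+ s. P' s \<partial>M) = ennreal (\<integral>s. P' s \<partial>M)"
    by (rule nn_integral_eq_integral[OF int_P']) (use P'_nonneg in auto)
  also have "\<dots> \<le> ennreal (c * (\<integral>s. P s \<partial>M))" using le by (rule ennreal_leI)
  also have "\<dots> = ennreal c * (\<integral>\<^sup>+ s. P s \<partial>M)"
    using \<open>c \<ge> 0\<close> P_nonneg
    by (simp add: ennreal_mult integral_nonneg nn_integral_eq_integral[OF int_P])
  finally show ?thesis .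
qed

end

section \<open>The stochastic iteration\<close>

lemma LIMSEQ_of_norm_sq_le:
  fixes X :: "nat \<Rightarrow> 'a::real_normed_vector"
  assumes P: "P \<longlonglongrightarrow> 0" and le: "\<And>t. (norm (X t - l))\<^sup>2 \<le> C * P t"
  shows "X \<longlonglongrightarrow> l"
proof -
  have "(\<lambda>t. sqrt (C * P t)) \<longlonglongrightarrow> sqrt (C * 0)" by (intro tendsto_intros P)
  then have s: "(\<lambda>t. sqrt (C * P t)) \<longlonglongrightarrow> 0" by simp
  have "\<forall>\<^sub>F t in sequentially. norm (X t - l) \<le> sqrt (C * P t)"
    using le by (simp add: real_le_rsqrt)
  then have "(\<lambda>t. norm (X t - l)) \<longlonglongrightarrow> 0"
    by (intro real_tendsto_sandwich[OF _ _ tendsto_const s]) auto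
  then show ?thesis by (simp add: tendsto_norm_zero_iff LIM_zero_iff)
qed

lemma AE_tendsto_zero_of_nn_integral_geometric:
  fixes P :: "nat \<Rightarrow> 's \<Rightarrow> real"
  assumes meas: "\<And>t. P t \<in> borel_measurable M" and nonneg: "\<And>t s. 0 \<le> P t s"
    and bound: "\<And>t. (\<integral>\<^sup>+ s. P t s \<partial>M) \<le> ennreal (c ^ t * B)"
    and "0 \<le> c" "c < 1" "0 \<le> B"
  shows "AE s in M. (\<lambda>t. P t s) \<longlonglongrightarrow> 0"
proof -
  have "summable (\<lambda>t. c ^ t * B)" using assms by (intro summable_mult2 summable_geometric) simp
  have "(\<integral>\<^sup>+ s. (\<Sum>t. ennreal (P t s)) \<partial>M) = (\<Sum>t. \<integral>\<^sup>+ s. ennreal (P t s) \<partial>M)"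
    by (rule nn_integral_suminf) (use meas in measurable)
  also have "\<dots> \<le> (\<Sum>t. ennreal (c ^ t * B))" by (intro suminf_le bound) auto
  also have "\<dots> = ennreal (\<Sum>t. c ^ t * B)"
    by (rule suminf_ennreal2[OF _ \<open>summable (\<lambda>t. c ^ t * B)\<close>]) (use assms in simp)
  finally have "(\<integral>\<^sup>+ s. (\<Sum>t. ennreal (P t s)) \<partial>M) \<noteq> \<infinity>" by (auto simp: top_unique)
  then have "AE s in M. (\<Sum>t. ennreal (P t s)) \<noteq> \<infinity>"
    by (rule nn_integral_PInf_AE[rotated]) (use meas in measurable)
  then show ?thesis
  proof eventually_elim
    case (elim s)
    then have "summable (\<lambda>t. P t s)" by (intro summable_suminf_not_top) (use nonneg in auto)
    then show ?case by (rule summable_LIMSEQ_zero)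
  qed
qed

lemma continuous_on_of_lipschitz_bound2:
  fixes \<Phi> :: "'a::real_normed_vector \<Rightarrow> 'b::real_normed_vector \<Rightarrow> 'c::real_normed_vector"
  assumes bound: "\<And>a b a' b'. norm (\<Phi> a b - \<Phi> a' b') \<le> C1 * norm (a - a') + C2 * norm (b - b')"
    and "C1 \<ge> 0" "C2 \<ge> 0"
  shows "continuous_on UNIV (\<lambda>p. \<Phi> (fst p) (snd p))"
proof (rule lipschitz_on_continuous_on)
  show "(C1 + C2)-lipschitz_on UNIV (\<lambda>p. \<Phi> (fst p) (snd p))"
  proof (rule lipschitz_onI)
    fix p q :: "'a \<times> 'b"
    have "dist (\<Phi> (fst p) (snd p)) (\<Phi> (fst q) (snd q)) \<le> C1 * dist (fst p) (fst q) + C2 * dist (snd p) (snd q)"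
      using bound by (simp add: dist_norm)
    also have "\<dots> \<le> C1 * dist p q + C2 * dist p q"
      using assms(2,3) dist_fst_le[of p q] dist_snd_le[of p q] by (intro add_mono mult_left_mono) auto
    finally show "dist (\<Phi> (fst p) (snd p)) (\<Phi> (fst q) (snd q)) \<le> (C1 + C2) * dist p q"
      by (simp add: algebra_simps)
  qed (use assms in simp)
qed

lemma weighted_norm_sq_perturb:
  fixes p q z :: "'a::real_inner"
  assumes "\<gamma> > 0"
  shows "(1 / \<gamma>) * (norm (p - \<alpha> *\<^sub>R z))\<^sup>2 + K * (norm (q + \<beta> *\<^sub>R z))\<^sup>2
       = (1 / \<gamma>) * (norm p)\<^sup>2 + K * (norm q)\<^sup>2 + 2 * inner (- (\<alpha> / \<gamma>) *\<^sub>R p + (K * \<beta>) *\<^sub>R q) z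
         + (\<alpha>\<^sup>2 / \<gamma> + K * \<beta>\<^sup>2) * (norm z)\<^sup>2"
  unfolding power2_norm_eq_inner
  by (simp add: inner_add_left inner_add_right inner_diff_left inner_diff_right inner_commute)
     (use assms in \<open>simp add: field_simps power2_eq_square\<close>)

context randprox_dy
begin

lemma lyap_nonneg: "0 \<le> dy_lyap \<gamma> om muh xs us x' u'"
  using gamma_pos om_nonneg muh_nonneg by (simp add: dy_lyap_def)

definition lin_bounded :: "('a \<Rightarrow> 'a \<Rightarrow> 'b::real_normed_vector) \<Rightarrow> bool" where
  "lin_bounded F \<longleftrightarrow> (\<exists>c. \<forall>x u. norm (F x u) \<le> c * (norm (x - xs) + norm (u - us)))"

lemma lin_boundedI: "(\<And>x u. norm (F x u) \<le> c * (norm (x - xs) + norm (u - us))) \<Longrightarrow> lin_bounded F"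
  unfolding lin_bounded_def by blast

lemma lin_bounded_add:
  assumes "lin_bounded F" "lin_bounded G"
  shows "lin_bounded (\<lambda>x u. F x u + G x u)"
proof -
  obtain c d where "\<And>x u. norm (F x u) \<le> c * (norm (x - xs) + norm (u - us))"
    and "\<And>x u. norm (G x u) \<le> d * (norm (x - xs) + norm (u - us))"
    using assms unfolding lin_bounded_def by blast
  then show ?thesis
    by (intro lin_boundedI[of _ "c + d"]) (smt (verit) norm_triangle_ineq distrib_right)
qed

lemma lin_bounded_scaleR: "lin_bounded F \<Longrightarrow> lin_bounded (\<lambda>x u. a *\<^sub>R F x u)"
  unfolding lin_bounded_def
  by (metis (no_types, opaque_lifting) abs_ge_zero mult.assoc mult_left_mono norm_scaleR)

lemma lin_bounded_diff: "lin_bounded F \<Longrightarrow> lin_bounded G \<Longrightarrow> lin_bounded (\<lambda>x u. F x u - G x u)"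
  using lin_bounded_add[of F "\<lambda>x u. (- 1) *\<^sub>R G x u"] lin_bounded_scaleR[of G "- 1"] by simp

lemma lin_bounded_x: "lin_bounded (\<lambda>x u. x - xs)" and lin_bounded_u: "lin_bounded (\<lambda>x u. u - us)"
  by (auto intro!: lin_boundedI[of _ 1])

lemma lin_bounded_xhat: "lin_bounded (\<lambda>x u. dy_xhat \<gamma> gradf g x u - xs)"
proof (rule lin_boundedI)
  fix x u
  have "norm (dy_xhat \<gamma> gradf g x u - xs) \<le> (1 + \<gamma> * Lf) * norm (x - xs) + \<gamma> * norm (u - us)"
    using dy_xhat_lipschitz[of x u xs us] by (simp add: dy_xhat_fixed_point)
  also have "\<dots> \<le> (1 + \<gamma> * Lf + \<gamma>) * (norm (x - xs) + norm (u - us))"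
    using gamma_pos Lf_nonneg by (simp add: algebra_simps)
  finally show "norm (dy_xhat \<gamma> gradf g x u - xs) \<le> (1 + \<gamma> * Lf + \<gamma>) * (norm (x - xs) + norm (u - us))" .
qed

lemma lin_bounded_res: "lin_bounded (\<lambda>x u. dy_res \<gamma> om h (dy_xhat \<gamma> gradf g x u) u)"
proof -
  obtain c where c: "\<And>x u. norm (dy_xhat \<gamma> gradf g x u - xs) \<le> c * (norm (x - xs) + norm (u - us))"
    using lin_bounded_xhat unfolding lin_bounded_def by blast
  show ?thesis
  proof (rule lin_boundedI)
    fix x u
    have "norm (dy_res \<gamma> om h (dy_xhat \<gamma> gradf g x u) u)
        \<le> 2 * norm (dy_xhat \<gamma> gradf g x u - xs) + \<gamma> * (1 + om) * norm (u - us)"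
      using dy_res_lipschitz[of "dy_xhat \<gamma> gradf g x u" u xs us] by (simp add: dy_res_fixed_point)
    also have "\<dots> \<le> 2 * (c * (norm (x - xs) + norm (u - us))) + \<gamma> * (1 + om) * norm (u - us)"
      using c[of x u] by simp
    also have "\<dots> \<le> (2 * c + \<gamma> * (1 + om)) * (norm (x - xs) + norm (u - us))"
    proof -
      have "0 \<le> \<gamma> * (1 + om) * norm (x - xs)" using step_pos by simp
      moreover have "(2 * c + \<gamma> * (1 + om)) * (norm (x - xs) + norm (u - us))
          = 2 * (c * (norm (x - xs) + norm (u - us))) + \<gamma> * (1 + om) * norm (x - xs) + \<gamma> * (1 + om) * norm (u - us)"
        by (simp add: algebra_simps)
      ultimately show ?thesis by linarith
    qed
    finally show "norm (dy_res \<gamma> om h (dy_xhat \<gamma> gradf g x u) u)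
        \<le> (2 * c + \<gamma> * (1 + om)) * (norm (x - xs) + norm (u - us))" .
  qed
qed

lemma lin_bounded_sq_le_lyap:
  assumes "lin_bounded F"
  obtains C where "\<And>x u. (norm (F x u))\<^sup>2 \<le> C * dy_lyap \<gamma> om muh xs us x u"
proof -
  obtain c where c: "\<And>x u. norm (F x u) \<le> c * (norm (x - xs) + norm (u - us))"
    using assms unfolding lin_bounded_def by blast
  define K where "K = (1 + om) * (\<gamma> * (1 + om) + 2 * muh)"
  have K: "K > 0" using gamma_pos om_nonneg muh_nonneg by (simp add: K_def add_pos_nonneg)
  have "(norm (F x u))\<^sup>2 \<le> (2 * c\<^sup>2 * (\<gamma> + 1 / K)) * dy_lyap \<gamma> om muh xs us x u" for x u
  proof -
    let ?a = "norm (x - xs)" and ?b = "norm (u - us)"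
    have "dy_lyap \<gamma> om muh xs us x u = ?a\<^sup>2 / \<gamma> + K * ?b\<^sup>2" by (simp add: dy_lyap_def K_def)
    then have "(\<gamma> + 1 / K) * dy_lyap \<gamma> om muh xs us x u = ?a\<^sup>2 + ?b\<^sup>2 + (\<gamma> * K * ?b\<^sup>2 + ?a\<^sup>2 / (\<gamma> * K))"
      using gamma_pos K by (simp add: field_simps)
    moreover have "0 \<le> \<gamma> * K * ?b\<^sup>2 + ?a\<^sup>2 / (\<gamma> * K)" using gamma_pos K by simp
    ultimately have sq: "?a\<^sup>2 + ?b\<^sup>2 \<le> (\<gamma> + 1 / K) * dy_lyap \<gamma> om muh xs us x u" by linarith
    have "(norm (F x u))\<^sup>2 \<le> (c * (?a + ?b))\<^sup>2" using c[of x u] by (simp add: power_mono)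
    also have "\<dots> = c\<^sup>2 * (?a + ?b)\<^sup>2" by (simp add: power_mult_distrib)
    also have "\<dots> \<le> c\<^sup>2 * (2 * (?a\<^sup>2 + ?b\<^sup>2))"
      using sum_squares_bound[of ?a ?b] by (intro mult_left_mono) (simp_all add: power2_sum)
    also have "\<dots> \<le> c\<^sup>2 * (2 * ((\<gamma> + 1 / K) * dy_lyap \<gamma> om muh xs us x u))"
      using sq by (intro mult_left_mono) auto
    finally show ?thesis by (simp add: mult_ac)
  qed
  then show ?thesis by (rule that)
qed

lemma continuous_on_dy_xhat: "continuous_on UNIV (\<lambda>p. dy_xhat \<gamma> gradf g (fst p) (snd p))"
  using dy_xhat_lipschitz gamma_pos Lf_nonneg
  by (intro continuous_on_of_lipschitz_bound2[of _ "1 + \<gamma> * Lf" \<gamma>]) auto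

lemma continuous_on_dy_res: "continuous_on UNIV (\<lambda>p. dy_res \<gamma> om h (dy_xhat \<gamma> gradf g (fst p) (snd p)) (snd p))"
proof (rule continuous_on_of_lipschitz_bound2)
  fix a b a' b' :: 'a
  have "norm (dy_res \<gamma> om h (dy_xhat \<gamma> gradf g a b) b - dy_res \<gamma> om h (dy_xhat \<gamma> gradf g a' b') b')
      \<le> 2 * ((1 + \<gamma> * Lf) * norm (a - a') + \<gamma> * norm (b - b')) + \<gamma> * (1 + om) * norm (b - b')"
    using dy_res_lipschitz dy_xhat_lipschitz[of a b a' b'] by (smt (verit, best))
  then show "norm (dy_res \<gamma> om h (dy_xhat \<gamma> gradf g a b) b - dy_res \<gamma> om h (dy_xhat \<gamma> gradf g a' b') b')
      \<le> (2 * (1 + \<gamma> * Lf)) * norm (a - a') + (2 * \<gamma> + \<gamma> * (1 + om)) * norm (b - b')"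
    by (simp add: algebra_simps)
qed (use gamma_pos Lf_nonneg om_nonneg in auto)

end

locale randprox_dy_process = randprox_dy f gradf g h Lf muf mug muh \<gamma> om xs us
  for f :: "'a::euclidean_space \<Rightarrow> real" and gradf g h Lf muf mug muh \<gamma> om xs us +
  fixes M :: "'s measure" and R :: "nat \<Rightarrow> 's \<Rightarrow> 'a \<Rightarrow> 'a" and x u :: "nat \<Rightarrow> 's \<Rightarrow> 'a"
    and x0 u0 :: 'a
  assumes prob: "prob_space M"
    and x_init: "\<And>s. x 0 s = x0" and u_init: "\<And>s. u 0 s = u0"
    and x_step: "\<And>t s. x (Suc t) s =
        dy_xhat \<gamma> gradf g (x t s) (u t s)
        - (1 / (1 + om)) *\<^sub>R R t s (dy_res \<gamma> om h (dy_xhat \<gamma> gradf g (x t s) (u t s)) (u t s))"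
    and u_step: "\<And>t s. u (Suc t) s = u t s
        + (1 / (\<gamma> * (1 + om)\<^sup>2)) *\<^sub>R R t s (dy_res \<gamma> om h (dy_xhat \<gamma> gradf g (x t s) (u t s)) (u t s))"
    and R_meas: "\<And>t. (\<lambda>s. R t s (dy_res \<gamma> om h (dy_xhat \<gamma> gradf g (x t s) (u t s)) (u t s)))
                        \<in> borel_measurable M"
    and R_unbiased: "\<And>t i. i \<in> Basis \<Longrightarrow> AE s in M.
          real_cond_exp M (gen_filtration M x u t)
            (\<lambda>s'. inner (R t s' (dy_res \<gamma> om h (dy_xhat \<gamma> gradf g (x t s') (u t s')) (u t s'))) i) s
          = inner (dy_res \<gamma> om h (dy_xhat \<gamma> gradf g (x t s) (u t s)) (u t s)) i"
    and R_variance: "\<And>t. AE s in M.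
          nn_cond_exp M (gen_filtration M x u t)
            (\<lambda>s'. ennreal ((norm (R t s' (dy_res \<gamma> om h (dy_xhat \<gamma> gradf g (x t s') (u t s')) (u t s'))
                              - dy_res \<gamma> om h (dy_xhat \<gamma> gradf g (x t s') (u t s')) (u t s')))\<^sup>2)) s
          \<le> ennreal (om * (norm (dy_res \<gamma> om h (dy_xhat \<gamma> gradf g (x t s) (u t s)) (u t s)))\<^sup>2)"
begin

abbreviation xhat :: "nat \<Rightarrow> 's \<Rightarrow> 'a" where
  "xhat t s \<equiv> dy_xhat \<gamma> gradf g (x t s) (u t s)"

abbreviation res :: "nat \<Rightarrow> 's \<Rightarrow> 'a" where
  "res t s \<equiv> dy_res \<gamma> om h (xhat t s) (u t s)"

abbreviation lyap :: "nat \<Rightarrow> 's \<Rightarrow> real" where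
  "lyap t s \<equiv> dy_lyap \<gamma> om muh xs us (x t s) (u t s)"

lemma iterates_measurable: "x t \<in> borel_measurable M" "u t \<in> borel_measurable M"
proof -
  have "x t \<in> borel_measurable M \<and> u t \<in> borel_measurable M"
  proof (induction t)
    case 0
    have "x 0 = (\<lambda>_. x0)" "u 0 = (\<lambda>_. u0)" using x_init u_init by auto
    then show ?case by simp
  next
    case (Suc t)
    then have "(\<lambda>s. (x t s, u t s)) \<in> borel_measurable M" by (intro borel_measurable_Pair) auto
    from borel_measurable_continuous_on[OF continuous_on_dy_xhat this]
    have "xhat t \<in> borel_measurable M" by simp
    moreover have "x (Suc t) = (\<lambda>s. xhat t s - (1 / (1 + om)) *\<^sub>R R t s (res t s))"
      and "u (Suc t) = (\<lambda>s. u t s + (1 / (\<gamma> * (1 + om)\<^sup>2)) *\<^sub>R R t s (res t s))"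
      using x_step u_step by auto
    ultimately show ?case using Suc R_meas[of t] by (auto intro!: borel_measurable_add borel_measurable_scaleR)
  qed
  then show "x t \<in> borel_measurable M" "u t \<in> borel_measurable M" by auto
qed

lemma iterates_measurable_filtration:
  "subalgebra M (gen_filtration M x u t)"
  "(\<lambda>s. (x t s, u t s)) \<in> borel_measurable (gen_filtration M x u t)"
proof -
  have "(\<lambda>s. (x i s, u i s)) \<in> borel_measurable M" for i
    using iterates_measurable by (intro borel_measurable_Pair) auto
  then show "subalgebra M (gen_filtration M x u t)"
    "(\<lambda>s. (x t s, u t s)) \<in> borel_measurable (gen_filtration M x u t)"
    by (rule gen_filtration_subalgebra)+
qed

lemma res_measurable_filtration: "res t \<in> borel_measurable (gen_filtration M x u t)"
  using borel_measurable_continuous_on[OF continuous_on_dy_res iterates_measurable_filtration(2)] by simp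

lemma lyap_nn_integral_step:
  assumes finite: "(\<integral>\<^sup>+ s. lyap t s \<partial>M) < \<infinity>"
  shows "(\<integral>\<^sup>+ s. lyap (Suc t) s \<partial>M) \<le> ennreal rate * (\<integral>\<^sup>+ s. lyap t s \<partial>M)"
proof -
  define \<alpha> \<beta> K where "\<alpha> = 1 / (1 + om)" and "\<beta> = 1 / (\<gamma> * (1 + om)\<^sup>2)"
    and "K = (1 + om) * (\<gamma> * (1 + om) + 2 * muh)"
  have K: "K > 0" using gamma_pos om_nonneg muh_nonneg by (simp add: K_def add_pos_nonneg)
  define x' u' where "x' = (\<lambda>x u. (dy_xhat \<gamma> gradf g x u - xs) - \<alpha> *\<^sub>R dy_res \<gamma> om h (dy_xhat \<gamma> gradf g x u) u)"
    and "u' = (\<lambda>x u. (u - us) + \<beta> *\<^sub>R dy_res \<gamma> om h (dy_xhat \<gamma> gradf g x u) u)"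
  define W where "W = (\<lambda>x u. - (\<alpha> / \<gamma>) *\<^sub>R x' x u + (K * \<beta>) *\<^sub>R u' x u)"
  define Q where "Q = (\<lambda>x u. (1 / \<gamma>) * (norm (x' x u))\<^sup>2 + K * (norm (u' x u))\<^sup>2)"
  have cont_W: "continuous_on UNIV (\<lambda>p. W (fst p) (snd p))"
    and cont_Q: "continuous_on UNIV (\<lambda>p. Q (fst p) (snd p))"
    unfolding W_def Q_def x'_def u'_def
    by (intro continuous_intros continuous_on_dy_xhat continuous_on_dy_res)+
  have W_meas: "(\<lambda>s. W (x t s) (u t s)) \<in> borel_measurable (gen_filtration M x u t)"
    using borel_measurable_continuous_on[OF cont_W iterates_measurable_filtration(2)] by simp
  have Q_meas: "(\<lambda>s. Q (x t s) (u t s)) \<in> borel_measurable M"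
    using measurable_from_subalg[OF iterates_measurable_filtration(1)
        borel_measurable_continuous_on[OF cont_Q iterates_measurable_filtration(2)]] by simp
  have "lin_bounded W"
    unfolding W_def x'_def u'_def
    by (intro lin_bounded_add lin_bounded_diff lin_bounded_scaleR lin_bounded_xhat lin_bounded_res
        lin_bounded_u)
  then obtain C\<^sub>W where W_dom: "\<And>x u. (norm (W x u))\<^sup>2 \<le> C\<^sub>W * dy_lyap \<gamma> om muh xs us x u"
    by (rule lin_bounded_sq_le_lyap) blast
  obtain C\<^sub>r where r_dom: "\<And>x u. (norm (dy_res \<gamma> om h (dy_xhat \<gamma> gradf g x u) u))\<^sup>2 \<le> C\<^sub>r * dy_lyap \<gamma> om muh xs us x u"
    using lin_bounded_res by (rule lin_bounded_sq_le_lyap) blast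
  have int_lyap: "integrable M (lyap t)"
    by (rule integrableI_nonneg) (use finite iterates_measurable lyap_nonneg in \<open>auto simp: dy_lyap_def\<close>)
  show ?thesis
  proof (rule nn_integral_noisy_step_le[OF prob iterates_measurable_filtration(1) W_meas res_measurable_filtration
        R_meas Q_meas int_lyap lyap_nonneg W_dom r_dom])
    show "(\<alpha>\<^sup>2 / \<gamma> + K * \<beta>\<^sup>2) \<ge> 0" "om \<ge> 0" "rate \<ge> 0"
      using gamma_pos K om_nonneg rate_nonneg by auto
    show "0 \<le> Q (x t s) (u t s)" for s using gamma_pos K by (simp add: Q_def)
    show "Q (x t s) (u t s) + (\<alpha>\<^sup>2 / \<gamma> + K * \<beta>\<^sup>2) * om * (norm (res t s))\<^sup>2 \<le> rate * lyap t s" for s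
      using dy_step_bound[of "x t s" "u t s"]
      by (simp add: Q_def x'_def u'_def \<alpha>_def \<beta>_def K_def algebra_simps)
    show "lyap (Suc t) s = Q (x t s) (u t s) + 2 * inner (W (x t s) (u t s)) (R t s (res t s) - res t s)
        + (\<alpha>\<^sup>2 / \<gamma> + K * \<beta>\<^sup>2) * (norm (R t s (res t s) - res t s))\<^sup>2" for s
    proof -
      have x: "x (Suc t) s - xs = x' (x t s) (u t s) - \<alpha> *\<^sub>R (R t s (res t s) - res t s)"
        by (simp add: x_step x'_def \<alpha>_def algebra_simps)
      have u: "u (Suc t) s - us = u' (x t s) (u t s) + \<beta> *\<^sub>R (R t s (res t s) - res t s)"
        by (simp add: u_step u'_def \<beta>_def algebra_simps)
      show ?thesis
        unfolding dy_lyap_def K_def[symmetric] x u weighted_norm_sq_perturb[OF gamma_pos] Q_def W_def ..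
    qed
  qed (use R_unbiased R_variance lyap_nonneg in auto)
qed

lemma lyap_nn_integral_bound:
  "(\<integral>\<^sup>+ s. lyap t s \<partial>M) \<le> ennreal (rate ^ t * dy_lyap \<gamma> om muh xs us x0 u0)"
proof (induction t)
  case 0
  show ?case using x_init u_init prob_space.emeasure_space_1[OF prob] by simp
next
  case (Suc t)
  then have "(\<integral>\<^sup>+ s. lyap t s \<partial>M) < \<infinity>" by (simp add: le_less_trans)
  then have "(\<integral>\<^sup>+ s. lyap (Suc t) s \<partial>M) \<le> ennreal rate * (\<integral>\<^sup>+ s. lyap t s \<partial>M)"
    by (rule lyap_nn_integral_step)
  also have "\<dots> \<le> ennreal rate * ennreal (rate ^ t * dy_lyap \<gamma> om muh xs us x0 u0)"
    using Suc.IH by (rule mult_left_mono) simp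
  also have "\<dots> = ennreal (rate ^ Suc t * dy_lyap \<gamma> om muh xs us x0 u0)"
    using rate_nonneg lyap_nonneg by (simp add: ennreal_mult[symmetric] mult.assoc)
  finally show ?case .
qed

lemma AE_iterates_tendsto:
  assumes "rate < 1"
  shows "AE s in M. (\<lambda>t. x t s) \<longlonglongrightarrow> xs \<and> (\<lambda>t. xhat t s) \<longlonglongrightarrow> xs \<and> (\<lambda>t. u t s) \<longlonglongrightarrow> us"
proof -
  obtain Cx Cu Cxh
    where bounds: "\<And>x u. (norm (x - xs))\<^sup>2 \<le> Cx * dy_lyap \<gamma> om muh xs us x u"
      "\<And>x u. (norm (u - us))\<^sup>2 \<le> Cu * dy_lyap \<gamma> om muh xs us x u"
      "\<And>x u. (norm (dy_xhat \<gamma> gradf g x u - xs))\<^sup>2 \<le> Cxh * dy_lyap \<gamma> om muh xs us x u"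
    using lin_bounded_sq_le_lyap[OF lin_bounded_x] lin_bounded_sq_le_lyap[OF lin_bounded_u]
      lin_bounded_sq_le_lyap[OF lin_bounded_xhat] by metis
  have "lyap t \<in> borel_measurable M" for t
    using iterates_measurable[of t] by (simp add: dy_lyap_def)
  then have "AE s in M. (\<lambda>t. lyap t s) \<longlonglongrightarrow> 0"
    by (rule AE_tendsto_zero_of_nn_integral_geometric[OF _ _ lyap_nn_integral_bound])
       (use rate_nonneg assms lyap_nonneg in auto)
  then show ?thesis
  proof eventually_elim
    case (elim s)
    then show ?case using bounds by (blast intro: LIMSEQ_of_norm_sq_le)
  qed
qed

end

theorem theorem9:
  fixes f :: "'a::euclidean_space \<Rightarrow> real" and gradf :: "'a \<Rightarrow> 'a"
    and g h :: "'a \<Rightarrow> ereal"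
    and Lf muf mug muh \<gamma> om :: real
    and M :: "'s measure"
    and R :: "nat \<Rightarrow> 's \<Rightarrow> 'a \<Rightarrow> 'a"
    and x u :: "nat \<Rightarrow> 's \<Rightarrow> 'a"
    and x0 u0 xs us :: 'a
  assumes f_grad: "\<And>y. (f has_derivative (\<lambda>v. inner (gradf y) v)) (at y)"
    and f_convex: "convex_on UNIV f"
    and f_smooth: "\<And>y z. norm (gradf y - gradf z) \<le> Lf * norm (y - z)"
    and g_pcc: "pcc g" and h_pcc: "pcc h"
    and f_sc: "muf \<ge> 0" "convex_on UNIV (\<lambda>y. f y - muf / 2 * (norm y)\<^sup>2)"
    and g_sc: "strongly_convex_fun mug g"
    and h_sc: "strongly_convex_fun muh (conjugate h)"
    and kkt: "\<exists>xk uk. - gradf xk - uk \<in> subdiff g xk \<and> xk \<in> subdiff (conjugate h) uk"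
    and xs_opt: "\<And>y. ereal (f xs) + g xs + h xs \<le> ereal (f y) + g y + h y"
    and us_opt: "\<And>v. conjugate (\<lambda>y. ereal (f y) + g y) (- us) + conjugate h us
                      \<le> conjugate (\<lambda>y. ereal (f y) + g y) (- v) + conjugate h v"
    and mu_pos: "muf > 0 \<or> mug > 0" and muh_pos: "muh > 0"
    and gamma: "\<gamma> > 0" "\<gamma> * Lf < 2"
    and om: "om \<ge> 0"
    and M: "prob_space M"
    and x_init: "\<And>s. x 0 s = x0" and u_init: "\<And>s. u 0 s = u0"
    and x_step: "\<And>t s. x (Suc t) s =
        dy_xhat \<gamma> gradf g (x t s) (u t s)
        - (1 / (1 + om)) *\<^sub>R R t s (dy_res \<gamma> om h (dy_xhat \<gamma> gradf g (x t s) (u t s)) (u t s))"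
    and u_step: "\<And>t s. u (Suc t) s = u t s
        + (1 / (\<gamma> * (1 + om)\<^sup>2)) *\<^sub>R R t s (dy_res \<gamma> om h (dy_xhat \<gamma> gradf g (x t s) (u t s)) (u t s))"
    and R_meas: "\<And>t. (\<lambda>s. R t s (dy_res \<gamma> om h (dy_xhat \<gamma> gradf g (x t s) (u t s)) (u t s)))
                        \<in> borel_measurable M"
    and R_integrable: "\<And>t. integrable M
          (\<lambda>s. R t s (dy_res \<gamma> om h (dy_xhat \<gamma> gradf g (x t s) (u t s)) (u t s)))"
    and R_unbiased: "\<And>t i. i \<in> Basis \<Longrightarrow> AE s in M.
          real_cond_exp M (gen_filtration M x u t)
            (\<lambda>s'. inner (R t s' (dy_res \<gamma> om h (dy_xhat \<gamma> gradf g (x t s') (u t s')) (u t s'))) i) s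
          = inner (dy_res \<gamma> om h (dy_xhat \<gamma> gradf g (x t s) (u t s)) (u t s)) i"
    and R_variance: "\<And>t. AE s in M.
          nn_cond_exp M (gen_filtration M x u t)
            (\<lambda>s'. ennreal ((norm (R t s' (dy_res \<gamma> om h (dy_xhat \<gamma> gradf g (x t s') (u t s')) (u t s'))
                              - dy_res \<gamma> om h (dy_xhat \<gamma> gradf g (x t s') (u t s')) (u t s')))\<^sup>2)) s
          \<le> ennreal (om * (norm (dy_res \<gamma> om h (dy_xhat \<gamma> gradf g (x t s) (u t s)) (u t s)))\<^sup>2)"
  shows "let c = max ((1 - \<gamma> * muf)\<^sup>2 / (1 + \<gamma> * mug))
                 (max ((\<gamma> * Lf - 1)\<^sup>2 / (1 + \<gamma> * mug))
                      (1 - (2 / \<gamma> * muh) / ((1 + om) * (1 + om + 2 / \<gamma> * muh))))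
         in c < 1
          \<and> (\<forall>t. (\<integral>\<^sup>+ s. ennreal (dy_lyap \<gamma> om muh xs us (x t s) (u t s)) \<partial>M)
                  \<le> ennreal (c ^ t * dy_lyap \<gamma> om muh xs us x0 u0))
          \<and> (AE s in M. (\<lambda>t. x t s) \<longlonglongrightarrow> xs
                      \<and> (\<lambda>t. dy_xhat \<gamma> gradf g (x t s) (u t s)) \<longlonglongrightarrow> xs
                      \<and> (\<lambda>t. u t s) \<longlonglongrightarrow> us)"
proof -
  obtain x\<^sub>k u\<^sub>k where kkt_g: "- gradf x\<^sub>k - u\<^sub>k \<in> subdiff g x\<^sub>k" and kkt_h: "x\<^sub>k \<in> subdiff (conjugate h) u\<^sub>k"
    using kkt by blast
  interpret saddle: randprox_dy f gradf g h Lf muf mug muh \<gamma> om x\<^sub>k u\<^sub>k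
    by unfold_locales (use f_grad f_smooth f_sc g_pcc h_pcc g_sc h_sc gamma om kkt_g kkt_h in auto)
  have "xs = x\<^sub>k" by (rule saddle.primal_minimizer_unique[OF xs_opt mu_pos])
  moreover have "us = u\<^sub>k" by (rule saddle.dual_minimizer_unique[OF us_opt muh_pos])
  ultimately have saddle_point: "randprox_dy f gradf g h Lf muf mug muh \<gamma> om xs us"
    using saddle.randprox_dy_axioms by simp
  interpret randprox_dy_process f gradf g h Lf muf mug muh \<gamma> om xs us M R x u x0 u0
    using M x_init u_init x_step u_step R_meas R_unbiased R_variance
    by (intro randprox_dy_process.intro[OF saddle_point] randprox_dy_process_axioms.intro)
  have "rate < 1" by (rule rate_lt_1[OF mu_pos muh_pos gamma(2)])
  then show ?thesis
    unfolding Let_def rate_def[symmetric] using lyap_nn_integral_bound AE_iterates_tendsto by blast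
qed

end
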